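(* Let $\Pi$ be a stably (resp. haltingly) correct CRN protocol with respect to an interface $\mathcal{I}$, and let $\mathbf{C}^0$ be an infinite family of valid initial configurations that has a stabilization (resp. halting) speed fault. Then there is a constant $\kappa>0$ such that for every integer $n_0>0$ there exist a configuration $\mathbf{c}^0\in\mathbf{C}^0$ of molecular count $\|\mathbf{c}^0\|_1=n\ge n_0$, a weakly fair execution $\eta$ emerging from $\mathbf{c}^0$, and a skipping policy $\sigma$ such that $\operatorname{RT}_{\mathrm{x}}^{\varrho,\sigma}(\eta)\ge\kappa n$ for every runtime policy $\varrho$, where $\mathrm{x}$ stands for $\mathrm{stab}$ (resp. $\mathrm{halt}$).
   Context: Model. CRN protocol $\Pi=(\mathcal{S},\mathcal{R})$: finite species set, finite reaction set $\mathcal{R}\subset\mathbb{N}^{\mathcal{S}}\times\mathbb{N}^{\mathcal{S}}$ of reactions $(\mathbf{r},\mathbf{p})$ with $\|\mathbf{r}\|_1\in\{1,2\}$, $\|\mathbf{r}\|_1\le\|\mathbf{p}\|_1$, each $\mathbf{r}$ with $1\le\|\mathbf{r}\|_1\le2$ having a nonempty set $\mathcal{R}(\mathbf{r})$ of reactions, void reactions ($\mathbf{r}=\mathbf{p}$) being alone in their $\mathcal{R}(\mathbf{r})$, $\operatorname{NV}(\mathcal{R})$ the non-void ones; finite density assumed. Configurations $\mathbf{c}\in\mathbb{N}^{\mathcal{S}}$ ($\|\mathbf{c}\|_1\ge1$); applicability $\mathbf{r}\le\mathbf{c}$, result $\mathbf{c}-\mathbf{r}+\mathbf{p}$; $\operatorname{app}(\mathbf{c})$,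 $\overline{\operatorname{app}}(\mathbf{c})$; reachability $\stackrel{*}{\rightharpoonup}$; configuration digraph $D^{\Pi}$ with $\alpha$-labeled edges $\mathbf{c}\to\alpha(\mathbf{c})$. $\mathrm{stab}(Z)$, $\mathrm{halt}(Z)$: configurations in $Z$ all of whose reachable configurations are in $Z$, resp. equal to themselves. Executions $\langle\mathbf{c}^t,\alpha^t\rangle$, weakly fair if every reaction applicable at step $t$ is scheduled or inapplicable at some later step. Interface $\mathcal{I}=(\mathcal{U},\mu,\mathcal{C})$, $Z_{\mathcal{I}}(\mathbf{c}^0)=\{\mathbf{c}:(\mu(\mathbf{c}^0),\mu(\mathbf{c}))\in\mathcal{C}\}$ with $\mu(\mathbf{c})(u)=\sum_{\mu(A)=u}\mathbf{c}(A)$; valid if nonempty; stably (haltingly) correct: every weakly fair execution from valid $\mathbf{c}^0$ reaches $\mathrm{stab}(Z_{\mathcal{I}}(\mathbf{c}^0))$ ($\mathrm{halt}$); first such step = stabilization (halting) step. Stochastic scheduler with volume $\varphi=\Theta(n)$: propensity $\pi_{\mathbf{c}}(\alpha)=\mathbf{c}(A)/|\mathcal{R}(\mathbf{r})|$ ($\mathbf{r}=A$), $\frac1\varphi\binom{\mathbf{c}(A)}2/|\mathcal{R}(\mathbf{r})|$ ($\mathbf{r}=2A$), $\frac1\varphi\mathbf{c}(A)\mathbf{c}(B)/|\mathcal{R}(\mathbf{r})|$ ($\mathbf{r}=A+B$, $A\ne B$); $\pi_{\mathbf{c}}=\pi_{\mathbf{c}}(\mathcal{R})$; reactions chosen with probability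 proportional to propensity; step time span $1/\pi_{\mathbf{c}^t}$. Runtime: $\tau(\eta,t,Q)=$ least $s>t$ with $\alpha^{s-1}\in Q$ or $Q\subseteq\bigcup_{t\le t'\le s}\overline{\operatorname{app}}(\mathbf{c}^{t'})$; runtime policy $\varrho(\mathbf{c})\subseteq\operatorname{NV}(\mathcal{R})$; skipping policy $\sigma(t)\ge t$; rounds $t(0)=0$, $t_e(i)=\sigma(t(i))$, $\mathbf{e}^i=\mathbf{c}^{t_e(i)}$, $t(i+1)=\tau(\eta,t_e(i),\varrho(\mathbf{e}^i))$; $\operatorname{TC}^{\varrho}(\mathbf{c})$ = expected total time span of steps $0,\dots,\tau(\eta_r,0,\varrho(\mathbf{c}))-1$ of a stochastic execution $\eta_r$ from $\mathbf{c}$; $\operatorname{RT}_{\mathrm{stab}}^{\varrho,\sigma}(\eta)$ (resp. $\mathrm{halt}$) $=\sum_{i<i^*}\operatorname{TC}^{\varrho}(\mathbf{e}^i)$ with $i^*=\min\{i:t(i)\ge t^*\}$, $t^*$ the stabilization (halting) step. Speed faults: for $s>0$, a configuration $\mathbf{c}$ is a stabilization (resp. halting) $s$-pitfall of a valid initial configuration $\mathbf{c}^0$ if $\mathbf{c}^0\stackrel{*}{\rightharpoonup}\mathbf{c}$ and every path in $D^{\Pi}$ from $\mathbf{c}$ to $\mathrm{stab}(Z_{\mathcal{I}}(\mathbf{c}^0))$ (resp. $\mathrm{halt}(Z_{\mathcal{I}}(\mathbf{c}^0))$) includes an edge labeled by a reaction whose propensity (at the edge's source configuration) is at most $s/\varphi$.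 An infinite family $\mathbf{C}^0$ of valid initial configurations has a stabilization (resp. halting) speed fault if for some constant $s>0$ and every integer $n_0>0$ there is $\mathbf{c}^0\in\mathbf{C}^0$ with $\|\mathbf{c}^0\|_1\ge n_0$ that admits a stabilization (resp. halting) $s$-pitfall. *)

theory Defs
  imports "HOL-Analysis.Analysis"
begin

(* Species: the elements of a finite type 's.  Configurations / reactant and
   product vectors: 's => nat.  A reaction is a pair (r, p). *)
type_synonym 's config = "'s \<Rightarrow> nat"
type_synonym 's reaction = "'s config \<times> 's config"

definition norm1 :: "('s::finite) config \<Rightarrow> nat" where
  "norm1 c = (\<Sum>A\<in>UNIV. c A)"

definition reactions_of :: "('s::finite) reaction set \<Rightarrow> 's config \<Rightarrow> 's reaction set" where
  "reactions_of R r = {\<alpha>\<in>R. fst \<alpha> = r}"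

definition crn_protocol :: "('s::finite) reaction set \<Rightarrow> bool" where
  "crn_protocol R \<longleftrightarrow> finite R
     \<and> (\<forall>(r,p)\<in>R. 1 \<le> norm1 r \<and> norm1 r \<le> 2 \<and> norm1 r \<le> norm1 p)
     \<and> (\<forall>r. 1 \<le> norm1 r \<and> norm1 r \<le> 2 \<longrightarrow> reactions_of R r \<noteq> {})
     \<and> (\<forall>r. (r,r) \<in> R \<longrightarrow> reactions_of R r = {(r,r)})"

definition NV :: "('s::finite) reaction set \<Rightarrow> 's reaction set" where
  "NV R = {(r,p)\<in>R. r \<noteq> p}"

definition applicable :: "('s::finite) reaction \<Rightarrow> 's config \<Rightarrow> bool" where
  "applicable \<alpha> c \<longleftrightarrow> fst \<alpha> \<le> c"

definition result :: "('s::finite) reaction \<Rightarrow> 's config \<Rightarrow> 's config" where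
  "result \<alpha> c = (\<lambda>A. c A - fst \<alpha> A + snd \<alpha> A)"

definition app :: "('s::finite) reaction set \<Rightarrow> 's config \<Rightarrow> 's reaction set" where
  "app R c = {\<alpha>\<in>R. applicable \<alpha> c}"

definition inapp :: "('s::finite) reaction set \<Rightarrow> 's config \<Rightarrow> 's reaction set" where
  "inapp R c = {\<alpha>\<in>R. \<not> applicable \<alpha> c}"

definition step :: "('s::finite) reaction set \<Rightarrow> 's config \<Rightarrow> 's config \<Rightarrow> bool" where
  "step R c c' \<longleftrightarrow> (\<exists>\<alpha>\<in>R. applicable \<alpha> c \<and> c' = result \<alpha> c)"

definition reach :: "('s::finite) reaction set \<Rightarrow> 's config \<Rightarrow> 's config \<Rightarrow> bool" where
  "reach R = (step R)\<^sup>*\<^sup>*"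

(* Interface I = (U, mu, C): U is the type 'u, mu :: 's => 'u, C a relation *)
definition proj :: "(('s::finite) \<Rightarrow> 'u) \<Rightarrow> 's config \<Rightarrow> ('u \<Rightarrow> nat)" where
  "proj \<mu> c = (\<lambda>u. \<Sum>A\<in>{A. \<mu> A = u}. c A)"

definition Zset :: "(('s::finite) \<Rightarrow> 'u) \<Rightarrow> (('u \<Rightarrow> nat) \<times> ('u \<Rightarrow> nat)) set \<Rightarrow> 's config \<Rightarrow> 's config set" where
  "Zset \<mu> Cr c0 = {c. (proj \<mu> c0, proj \<mu> c) \<in> Cr}"

definition valid :: "(('s::finite) \<Rightarrow> 'u) \<Rightarrow> (('u \<Rightarrow> nat) \<times> ('u \<Rightarrow> nat)) set \<Rightarrow> 's config \<Rightarrow> bool" where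
  "valid \<mu> Cr c0 \<longleftrightarrow> 1 \<le> norm1 c0 \<and> Zset \<mu> Cr c0 \<noteq> {}"

definition stab :: "('s::finite) reaction set \<Rightarrow> 's config set \<Rightarrow> 's config set" where
  "stab R Z = {c\<in>Z. \<forall>c'. reach R c c' \<longrightarrow> c' \<in> Z}"

definition halt :: "('s::finite) reaction set \<Rightarrow> 's config set \<Rightarrow> 's config set" where
  "halt R Z = {c\<in>Z. \<forall>c'. reach R c c' \<longrightarrow> c' = c}"

datatype mode = Stab | Halt

definition target :: "mode \<Rightarrow> ('s::finite) reaction set \<Rightarrow> 's config set \<Rightarrow> 's config set" where
  "target x R Z = (case x of Stab \<Rightarrow> stab R Z | Halt \<Rightarrow> halt R Z)"

definition execution :: "('s::finite) reaction set \<Rightarrow> 's config \<Rightarrow> (nat \<Rightarrow> 's config) \<Rightarrow> (nat \<Rightarrow> 's reaction) \<Rightarrow> bool" where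
  "execution R c0 cs as \<longleftrightarrow> cs 0 = c0 \<and>
     (\<forall>t. as t \<in> R \<and> applicable (as t) (cs t) \<and> cs (Suc t) = result (as t) (cs t))"

definition weakly_fair :: "('s::finite) reaction set \<Rightarrow> (nat \<Rightarrow> 's config) \<Rightarrow> (nat \<Rightarrow> 's reaction) \<Rightarrow> bool" where
  "weakly_fair R cs as \<longleftrightarrow>
     (\<forall>t. \<forall>\<alpha>\<in>R. applicable \<alpha> (cs t) \<longrightarrow> (\<exists>t'\<ge>t. as t' = \<alpha> \<or> \<not> applicable \<alpha> (cs t')))"

definition correct :: "mode \<Rightarrow> ('s::finite) reaction set \<Rightarrow> ('s \<Rightarrow> 'u) \<Rightarrow> (('u \<Rightarrow> nat) \<times> ('u \<Rightarrow> nat)) set \<Rightarrow> bool" where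
  "correct x R \<mu> Cr \<longleftrightarrow> (\<forall>c0 cs as. valid \<mu> Cr c0 \<and> execution R c0 cs as \<and> weakly_fair R cs as
       \<longrightarrow> (\<exists>t. cs t \<in> target x R (Zset \<mu> Cr c0)))"

(* For a reaction (r,p):
   r = A      : c(A) / |R(r)|
   r = 2A     : (1/phi) * binom(c(A),2) / |R(r)|
   r = A + B  : (1/phi) * c(A) c(B) / |R(r)|
   uniformly written as (1 or 1/phi) * prod_A binom(c(A), r(A)) / |R(r)|. *)
definition propensity :: "('s::finite) reaction set \<Rightarrow> real \<Rightarrow> 's config \<Rightarrow> 's reaction \<Rightarrow> real" where
  "propensity R \<phi> c \<alpha> =
     (if norm1 (fst \<alpha>) = 1 then 1 else 1 / \<phi>)
     * (\<Prod>A\<in>UNIV. real (c A choose fst \<alpha> A))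
     / real (card (reactions_of R (fst \<alpha>)))"

definition ptot :: "('s::finite) reaction set \<Rightarrow> real \<Rightarrow> 's config \<Rightarrow> real" where
  "ptot R \<phi> c = (\<Sum>\<alpha>\<in>R. propensity R \<phi> c \<alpha>)"

definition tau :: "('s::finite) reaction set \<Rightarrow> (nat \<Rightarrow> 's config) \<Rightarrow> (nat \<Rightarrow> 's reaction) \<Rightarrow> nat \<Rightarrow> 's reaction set \<Rightarrow> nat" where
  "tau R cs as t Q = (LEAST s. t < s \<and> (as (s - 1) \<in> Q \<or> Q \<subseteq> (\<Union>t'\<in>{t..s}. inapp R (cs t'))))"

(* Expected total time span of steps 0 .. tau(eta_r,0,Q)-1 of the stochastic
   execution eta_r, truncated to horizon k.  Arguments: current configuration c
   and Qr = Q minus the reactions of Q that were inapplicable at some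
   configuration so far.  One step: pay the time span 1/pi_c, then choose alpha
   with probability pi_c(alpha)/pi_c; the stopping time has occurred iff
   alpha \<in> Q or every reaction of Q has been inapplicable at some configuration
   up to the new one. *)
fun TCk :: "('s::finite) reaction set \<Rightarrow> real \<Rightarrow> 's reaction set \<Rightarrow> nat \<Rightarrow> 's config \<Rightarrow> 's reaction set \<Rightarrow> ennreal" where
  "TCk R \<phi> Q 0 c Qr = 0"
| "TCk R \<phi> Q (Suc k) c Qr =
     ennreal (1 / ptot R \<phi> c)
     + (\<Sum>\<alpha>\<in>R. ennreal (propensity R \<phi> c \<alpha> / ptot R \<phi> c) *
          (if \<alpha> \<in> Q \<or> Qr - inapp R (result \<alpha> c) = {} then 0
           else TCk R \<phi> Q k (result \<alpha> c) (Qr - inapp R (result \<alpha> c))))"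

(* TC^rho(c) with Q = rho(c): expectation = limit of the horizon-truncated
   expectations (monotone convergence). *)
definition TC :: "('s::finite) reaction set \<Rightarrow> real \<Rightarrow> 's reaction set \<Rightarrow> 's config \<Rightarrow> ennreal" where
  "TC R \<phi> Q c = (SUP k. TCk R \<phi> Q k c (Q - inapp R c))"

definition runtime_policy :: "('s::finite) reaction set \<Rightarrow> ('s config \<Rightarrow> 's reaction set) \<Rightarrow> bool" where
  "runtime_policy R \<rho> \<longleftrightarrow> (\<forall>c. \<rho> c \<subseteq> NV R)"

definition skipping_policy :: "(nat \<Rightarrow> nat) \<Rightarrow> bool" where
  "skipping_policy \<sigma> \<longleftrightarrow> (\<forall>t. t \<le> \<sigma> t)"

fun rstart :: "('s::finite) reaction set \<Rightarrow> (nat \<Rightarrow> 's config) \<Rightarrow> (nat \<Rightarrow> 's reaction)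
     \<Rightarrow> ('s config \<Rightarrow> 's reaction set) \<Rightarrow> (nat \<Rightarrow> nat) \<Rightarrow> nat \<Rightarrow> nat" where
  "rstart R cs as \<rho> \<sigma> 0 = 0"
| "rstart R cs as \<rho> \<sigma> (Suc i) =
     tau R cs as (\<sigma> (rstart R cs as \<rho> \<sigma> i)) (\<rho> (cs (\<sigma> (rstart R cs as \<rho> \<sigma> i))))"

definition RT :: "mode \<Rightarrow> ('s::finite) reaction set \<Rightarrow> ('s \<Rightarrow> 'u) \<Rightarrow> (('u \<Rightarrow> nat) \<times> ('u \<Rightarrow> nat)) set
     \<Rightarrow> (nat \<Rightarrow> real) \<Rightarrow> ('s config \<Rightarrow> 's reaction set) \<Rightarrow> (nat \<Rightarrow> nat)
     \<Rightarrow> (nat \<Rightarrow> 's config) \<Rightarrow> (nat \<Rightarrow> 's reaction) \<Rightarrow> ennreal" where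
  "RT x R \<mu> Cr \<phi> \<rho> \<sigma> cs as =
     (let tstar = (LEAST t. cs t \<in> target x R (Zset \<mu> Cr (cs 0)));
          istar = (LEAST i. tstar \<le> rstart R cs as \<rho> \<sigma> i);
          e = (\<lambda>i. cs (\<sigma> (rstart R cs as \<rho> \<sigma> i)))
      in \<Sum>i<istar. TC R (\<phi> (norm1 (cs 0))) (\<rho> (e i)) (e i))"

definition pitfall :: "mode \<Rightarrow> ('s::finite) reaction set \<Rightarrow> ('s \<Rightarrow> 'u) \<Rightarrow> (('u \<Rightarrow> nat) \<times> ('u \<Rightarrow> nat)) set
     \<Rightarrow> real \<Rightarrow> real \<Rightarrow> 's config \<Rightarrow> 's config \<Rightarrow> bool" where
  "pitfall x R \<mu> Cr \<phi> s c0 c \<longleftrightarrow> valid \<mu> Cr c0 \<and> reach R c0 c \<and>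
     (\<forall>k cs as. cs 0 = c
        \<and> (\<forall>i<k. as i \<in> R \<and> applicable (as i) (cs i) \<and> cs (Suc i) = result (as i) (cs i))
        \<and> cs k \<in> target x R (Zset \<mu> Cr c0)
        \<longrightarrow> (\<exists>i<k. propensity R \<phi> (cs i) (as i) \<le> s / \<phi>))"

definition speed_fault :: "mode \<Rightarrow> ('s::finite) reaction set \<Rightarrow> ('s \<Rightarrow> 'u) \<Rightarrow> (('u \<Rightarrow> nat) \<times> ('u \<Rightarrow> nat)) set
     \<Rightarrow> (nat \<Rightarrow> real) \<Rightarrow> 's config set \<Rightarrow> bool" where
  "speed_fault x R \<mu> Cr \<phi> C0 \<longleftrightarrow>
     (\<exists>s>0. \<forall>n0>0. \<exists>c0\<in>C0. n0 \<le> norm1 c0 \<and> (\<exists>c. pitfall x R \<mu> Cr (\<phi> (norm1 c0)) s c0 c))"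

end

theory Submission
  imports Defs
begin

(* Let c be a pitfall of a large initial configuration c0, with volume phi.  Call a reaction fast
   when its propensity exceeds s/phi.  For phi > |R| s every nonempty configuration has a fast
   unimolecular reaction.  The configurations reachable from c by fast reactions form a finite graph
   (density assumption); take a bottom strongly connected component B of it.  B is closed under fast
   reactions and, by the pitfall property, contains no stable (halting) configuration.

   The adversarial execution goes from c0 into B, then repeats M times a closed walk through B that
   uses every fast reaction of B, and finally continues with any weakly fair execution.  The skipping
   policy jumps to the start of this cycling phase.  During the cycling phase a round ends within one
   period unless its policy set Q consists of reactions that are slow throughout B and contains a
   reaction applicable throughout B.  In that case the stochastic execution started in B has to
   leave B or fire a reaction of Q, and the total propensity of such reactions is at most |R| s/phi,
   so the expected time of the round is at least phi/(2 |R| s).  Otherwise each of the first M rounds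
   costs at least 1/max_B ptot, and M is chosen to make these add up to the same bound.  As phi is
   linear in n, so is the runtime. *)

section \<open>Walks in the configuration graph\<close>

definition edge_step :: "(('s::finite) config \<Rightarrow> 's reaction \<Rightarrow> bool) \<Rightarrow> 's config \<Rightarrow> 's config \<Rightarrow> bool" where
  "edge_step E x y \<longleftrightarrow> (\<exists>\<alpha>. E x \<alpha> \<and> y = result \<alpha> x)"

definition walk :: "(('s::finite) config \<Rightarrow> 's reaction \<Rightarrow> bool) \<Rightarrow> 's config \<Rightarrow> 's config \<Rightarrow> nat
   \<Rightarrow> (nat \<Rightarrow> 's config) \<Rightarrow> (nat \<Rightarrow> 's reaction) \<Rightarrow> bool" where
  "walk E x y k cs as \<longleftrightarrow>
     cs 0 = x \<and> cs k = y \<and> (\<forall>i<k. E (cs i) (as i) \<and> cs (Suc i) = result (as i) (cs i))"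

definition splice :: "nat \<Rightarrow> (nat \<Rightarrow> 'a) \<Rightarrow> (nat \<Rightarrow> 'a) \<Rightarrow> nat \<Rightarrow> 'a" where
  "splice k f g i = (if i < k then f i else g (i - k))"

lemma walk_mono:
  assumes "walk E x y k cs as" "\<And>c \<alpha>. E c \<alpha> \<Longrightarrow> E' c \<alpha>"
  shows "walk E' x y k cs as"
  using assms unfolding walk_def by blast

lemma rtranclp_edge_step_imp_walk:
  assumes "(edge_step E)\<^sup>*\<^sup>* x y"
  shows "\<exists>k cs as. walk E x y k cs as"
  using assms
proof (induction rule: rtranclp_induct)
  case base
  have "walk E x x 0 (\<lambda>_. x) as" for as by (simp add: walk_def)
  then show ?case by blast
next
  case (step y z)
  then obtain k cs as where p: "walk E x y k cs as" by blast
  from step(2) obtain \<alpha> where "E y \<alpha>" "z = result \<alpha> y" by (auto simp: edge_step_def)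
  with p have "walk E x z (Suc k) (cs(Suc k := z)) (as(k := \<alpha>))"
    by (auto simp: walk_def less_Suc_eq)
  then show ?case by blast
qed

lemma walk_imp_rtranclp_edge_step:
  assumes "walk E x y k cs as" "j \<le> k"
  shows "(edge_step E)\<^sup>*\<^sup>* x (cs j)" "(edge_step E)\<^sup>*\<^sup>* (cs j) y"
proof -
  have step: "edge_step E (cs i) (cs (Suc i))" if "i < k" for i
    using assms(1) that unfolding walk_def edge_step_def by blast
  have "(edge_step E)\<^sup>*\<^sup>* (cs i) (cs j)" if "i \<le> j" "j \<le> k" for i j
    using that
  proof (induction j)
    case (Suc j)
    show ?case
    proof (cases "i = Suc j")
      case False
      then have "(edge_step E)\<^sup>*\<^sup>* (cs i) (cs j)" using Suc by simp
      then show ?thesis using step[of j] Suc.prems by (simp add: rtranclp.rtrancl_into_rtrancl)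
    qed simp
  qed simp
  from this[of 0 j] this[of j k] assms show
    "(edge_step E)\<^sup>*\<^sup>* x (cs j)" "(edge_step E)\<^sup>*\<^sup>* (cs j) y"
    by (simp_all add: walk_def)
qed

lemma rtranclp_edge_step_closed:
  assumes "(edge_step E)\<^sup>*\<^sup>* x y" "x \<in> B" "\<forall>e\<in>B. \<forall>\<alpha>. E e \<alpha> \<longrightarrow> result \<alpha> e \<in> B"
  shows "y \<in> B"
  using assms by (induction rule: rtranclp_induct) (auto simp: edge_step_def)

lemma walk_append:
  assumes "walk E x y k1 cs1 as1" "walk E y z k2 cs2 as2"
  shows "walk E x z (k1 + k2) (splice k1 cs1 cs2) (splice k1 as1 as2)"
proof -
  have "E (splice k1 cs1 cs2 i) (splice k1 as1 as2 i) \<and>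
        splice k1 cs1 cs2 (Suc i) = result (splice k1 as1 as2 i) (splice k1 cs1 cs2 i)"
    if i: "i < k1 + k2" for i
  proof (cases "i < k1")
    case True
    then show ?thesis using assms by (cases "Suc i = k1") (auto simp: walk_def splice_def)
  next
    case False
    then have "Suc i - k1 = Suc (i - k1)" "i - k1 < k2" using i by linarith+
    with False show ?thesis using assms(2) by (auto simp: walk_def splice_def)
  qed
  then show ?thesis using assms by (auto simp: walk_def splice_def)
qed

lemma walk_repeat:
  assumes "walk E x x w cs as" "0 < w"
  shows "walk E x x (M * w) (\<lambda>i. cs (i mod w)) (\<lambda>i. as (i mod w))"
proof -
  have "E (cs (i mod w)) (as (i mod w)) \<and> cs (Suc i mod w) = result (as (i mod w)) (cs (i mod w))" for i
  proof -
    have "i mod w < w" using assms(2) by simp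
    then have "E (cs (i mod w)) (as (i mod w))"
        "cs (Suc (i mod w)) = result (as (i mod w)) (cs (i mod w))"
      using assms(1) by (auto simp: walk_def)
    moreover have "cs (Suc i mod w) = cs (Suc (i mod w))"
      using assms by (cases "Suc (i mod w) = w") (auto simp: walk_def mod_Suc)
    ultimately show ?thesis by simp
  qed
  then show ?thesis using assms by (simp add: walk_def)
qed

lemma walk_covering_edges:
  assumes strong: "\<forall>e\<in>B. \<forall>e'\<in>B. (edge_step E)\<^sup>*\<^sup>* e e'"
    and closed: "\<forall>e\<in>B. \<forall>\<alpha>. E e \<alpha> \<longrightarrow> result \<alpha> e \<in> B"
    and d: "d \<in> B"
    and F: "finite F" "\<forall>(e, \<alpha>)\<in>F. e \<in> B \<and> E e \<alpha>"
    and x: "x \<in> B"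
  shows "\<exists>k cs as. walk E x d k cs as \<and> (\<forall>(e, \<alpha>)\<in>F. \<exists>j<k. cs j = e \<and> as j = \<alpha>)"
  using F x
proof (induction F arbitrary: x rule: finite_induct)
  case empty
  then obtain k cs as where "walk E x d k cs as"
    using strong d rtranclp_edge_step_imp_walk by blast
  then show ?case by blast
next
  case (insert p F)
  obtain e \<alpha> where p: "p = (e, \<alpha>)" by (cases p)
  then have e: "e \<in> B" "E e \<alpha>" using insert.prems(1) by auto
  obtain k1 cs1 as1 where walk1: "walk E x e k1 cs1 as1"
    using strong insert.prems(2) e(1) rtranclp_edge_step_imp_walk by blast
  have walk2: "walk E e (result \<alpha> e) 1 (\<lambda>i. if i = 0 then e else result \<alpha> e) (\<lambda>_. \<alpha>)"
    using e by (simp add: walk_def)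
  have "result \<alpha> e \<in> B" using closed e by blast
  then obtain k3 cs3 as3 where walk3: "walk E (result \<alpha> e) d k3 cs3 as3"
    and cover: "\<forall>(e, \<alpha>)\<in>F. \<exists>j<k3. cs3 j = e \<and> as3 j = \<alpha>"
    using insert.IH insert.prems(1) by blast
  define cs where "cs = splice k1 cs1 (splice 1 (\<lambda>i. if i = 0 then e else result \<alpha> e) cs3)"
  define as where "as = splice k1 as1 (splice 1 (\<lambda>_. \<alpha>) as3)"
  have "walk E x d (k1 + (1 + k3)) cs as"
    unfolding cs_def as_def by (intro walk_append[OF walk1 walk_append[OF walk2 walk3]])
  moreover have "\<exists>j<k1 + (1 + k3). cs j = e' \<and> as j = \<alpha>'" if mem: "(e', \<alpha>') \<in> insert p F" for e' \<alpha>'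
  proof (cases "(e', \<alpha>') = p")
    case True
    then show ?thesis using walk1 p by (intro exI[of _ k1]) (simp add: cs_def as_def splice_def walk_def)
  next
    case False
    then obtain j where "j < k3" "cs3 j = e'" "as3 j = \<alpha>'" using cover mem by auto
    then show ?thesis by (intro exI[of _ "k1 + 1 + j"]) (simp add: cs_def as_def splice_def)
  qed
  ultimately show ?case by blast
qed

lemma exists_mod_eq_in_window:
  fixes n w j :: nat
  assumes "j < w"
  shows "\<exists>i<w. (n + i) mod w = j"
proof -
  define i where "i = (j + w - n mod w) mod w"
  have "n mod w + (j + w - n mod w) = j + w"
    using assms mod_less_divisor[of w n] by linarith
  moreover have "(n + i) mod w = (n mod w + (j + w - n mod w)) mod w"
    unfolding i_def by (metis mod_add_left_eq mod_add_right_eq)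
  ultimately have "(n + i) mod w = j" using assms by simp
  then show ?thesis using assms by (intro exI[of _ i]) (simp add: i_def)
qed

lemma periodic_window:
  fixes t ta tb w j :: nat
  assumes w: "j < w"
    and periodic: "\<forall>t. ta \<le> t \<longrightarrow> t < tb \<longrightarrow> cs t = cw ((t - ta) mod w) \<and> as t = aw ((t - ta) mod w)"
    and t: "ta \<le> t" "t + w \<le> tb"
  shows "\<exists>t'. t \<le> t' \<and> t' < t + w \<and> cs t' = cw j \<and> as t' = aw j"
proof -
  obtain i where i: "i < w" "(t - ta + i) mod w = j" using exists_mod_eq_in_window[OF w] by blast
  then have "cs (t + i) = cw j \<and> as (t + i) = aw j"
    using periodic t by (simp add: add.commute add.left_commute)
  then show ?thesis using i(1) by (intro exI[of _ "t + i"]) simp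
qed

section \<open>Executions\<close>

definition enabled :: "('s::finite) reaction set \<Rightarrow> 's config \<Rightarrow> 's reaction \<Rightarrow> bool" where
  "enabled R c \<alpha> \<longleftrightarrow> \<alpha> \<in> R \<and> applicable \<alpha> c"

lemma reach_eq_rtranclp_edge_step: "reach R = (edge_step (enabled R))\<^sup>*\<^sup>*"
proof -
  have "step R = edge_step (enabled R)"
    by (intro ext) (auto simp: step_def edge_step_def enabled_def)
  then show ?thesis by (simp add: reach_def)
qed

lemma reach_if_rtranclp_edge_step:
  assumes "(edge_step E)\<^sup>*\<^sup>* x y" "\<And>c \<alpha>. E c \<alpha> \<Longrightarrow> enabled R c \<alpha>"
  shows "reach R x y"
proof -
  have "edge_step (enabled R) c c'" if "edge_step E c c'" for c c'
    using that assms(2) unfolding edge_step_def by blast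
  then show ?thesis
    unfolding reach_eq_rtranclp_edge_step by (rule mono_rtranclp[rule_format, OF _ assms(1)])
qed

lemma reach_if_walk:
  assumes "walk E x y k cs as" "\<And>c \<alpha>. E c \<alpha> \<Longrightarrow> enabled R c \<alpha>" "j \<le> k"
  shows "reach R x (cs j)" "reach R (cs j) y"
  using walk_imp_rtranclp_edge_step[OF walk_mono[OF assms(1,2)] assms(3)]
  by (simp_all add: reach_eq_rtranclp_edge_step)

lemma target_reach_closed:
  assumes "c \<in> target x R Z" "reach R c c'"
  shows "c' \<in> target x R Z"
  using assms unfolding target_def stab_def halt_def reach_def
  by (cases x) (auto intro: rtranclp_trans)

lemma execution_splice:
  assumes "walk (enabled R) x y k cs1 as1" "execution R y cs2 as2"
  shows "execution R x (splice k cs1 cs2) (splice k as1 as2)"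
  unfolding execution_def
proof
  show "splice k cs1 cs2 0 = x"
    using assms by (cases k) (auto simp: splice_def walk_def execution_def)
  show "\<forall>t. splice k as1 as2 t \<in> R \<and> applicable (splice k as1 as2 t) (splice k cs1 cs2 t) \<and>
          splice k cs1 cs2 (Suc t) = result (splice k as1 as2 t) (splice k cs1 cs2 t)"
  proof
    fix t
    show "splice k as1 as2 t \<in> R \<and> applicable (splice k as1 as2 t) (splice k cs1 cs2 t) \<and>
          splice k cs1 cs2 (Suc t) = result (splice k as1 as2 t) (splice k cs1 cs2 t)"
    proof (cases "t < k")
      case True
      then show ?thesis using assms
        by (cases "Suc t = k") (auto simp: splice_def walk_def execution_def enabled_def)
    next
      case False
      then have "Suc t - k = Suc (t - k)" by linarith
      with False show ?thesis using assms(2) by (auto simp: splice_def execution_def)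
    qed
  qed
qed

lemma weakly_fair_splice:
  assumes "weakly_fair R cs2 as2"
  shows "weakly_fair R (splice k cs1 cs2) (splice k as1 as2)"
  unfolding weakly_fair_def
proof (intro allI ballI impI)
  fix t \<alpha> assume \<alpha>: "\<alpha> \<in> R" "applicable \<alpha> (splice k cs1 cs2 t)"
  let ?t0 = "max t k"
  show "\<exists>t'\<ge>t. splice k as1 as2 t' = \<alpha> \<or> \<not> applicable \<alpha> (splice k cs1 cs2 t')"
  proof (cases "applicable \<alpha> (splice k cs1 cs2 ?t0)")
    case True
    then have "applicable \<alpha> (cs2 (?t0 - k))" by (simp add: splice_def)
    then obtain t'' where "t'' \<ge> ?t0 - k" "as2 t'' = \<alpha> \<or> \<not> applicable \<alpha> (cs2 t'')"
      using assms \<alpha>(1) unfolding weakly_fair_def by blast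
    then show ?thesis by (intro exI[of _ "t'' + k"]) (auto simp: splice_def)
  next
    case False
    then show ?thesis using \<alpha>(2) by (intro exI[of _ ?t0]) (auto simp: max_def)
  qed
qed

lemma norm1_le_result:
  assumes "crn_protocol R" "enabled R c \<alpha>"
  shows "norm1 c \<le> norm1 (result \<alpha> c)"
proof -
  obtain r p where \<alpha>: "\<alpha> = (r, p)" by (cases \<alpha>)
  have rp: "norm1 r \<le> norm1 p" using assms \<alpha> unfolding crn_protocol_def enabled_def by fastforce
  have le: "r A \<le> c A" for A using assms(2) \<alpha> by (auto simp: enabled_def applicable_def le_fun_def)
  have "norm1 (result \<alpha> c) + norm1 r = (\<Sum>A\<in>UNIV. c A - r A + p A + r A)"
    by (simp add: norm1_def result_def \<alpha> sum.distrib)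
  also have "\<dots> = (\<Sum>A\<in>UNIV. c A + p A)"
  proof (intro sum.cong refl)
    fix A show "c A - r A + p A + r A = c A + p A" using le[of A] by linarith
  qed
  also have "\<dots> = norm1 c + norm1 p"
    by (simp add: norm1_def sum.distrib)
  finally show ?thesis using rp by linarith
qed

lemma norm1_le_reach:
  assumes "crn_protocol R" "reach R c c'"
  shows "norm1 c \<le> norm1 c'"
  using assms(2) unfolding reach_eq_rtranclp_edge_step
proof (induction rule: rtranclp_induct)
  case (step y z)
  then show ?case using norm1_le_result[OF assms(1)] by (fastforce simp: edge_step_def)
qed simp

lemma propensity_nonneg: "0 < \<phi> \<Longrightarrow> 0 \<le> propensity R \<phi> c \<alpha>"
  unfolding propensity_def by (auto intro!: divide_nonneg_nonneg mult_nonneg_nonneg prod_nonneg)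

lemma propensity_eq_0_if_not_applicable:
  assumes "\<not> applicable \<alpha> c"
  shows "propensity R \<phi> c \<alpha> = 0"
proof -
  from assms obtain A where "c A < fst \<alpha> A" by (auto simp: applicable_def le_fun_def not_le)
  then have "(\<Prod>A\<in>UNIV. real (c A choose fst \<alpha> A)) = 0" by (intro prod_zero) auto
  then show ?thesis by (simp add: propensity_def)
qed

lemma propensity_le_ptot:
  assumes "finite R" "\<alpha> \<in> R" "0 < \<phi>"
  shows "propensity R \<phi> c \<alpha> \<le> ptot R \<phi> c"
  unfolding ptot_def using assms propensity_nonneg by (intro member_le_sum) auto

text \<open>The witness is a unimolecular reaction, whose propensity does not involve the volume.\<close>

lemma exists_enabled_propensity_ge:
  assumes "crn_protocol R" "1 \<le> norm1 c"
  shows "\<exists>\<alpha>. enabled R c \<alpha> \<and> 1 / real (card R) \<le> propensity R \<phi> c \<alpha>"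
proof -
  obtain X where X: "1 \<le> c X"
    using assms(2) by (metis less_one not_le sum.neutral norm1_def)
  define r where "r = (\<lambda>A. if A = X then 1 else (0::nat))"
  have nr: "norm1 r = 1" unfolding norm1_def r_def by simp
  have fin: "finite R" using assms(1) by (simp add: crn_protocol_def)
  have "reactions_of R r \<noteq> {}" using assms(1) nr unfolding crn_protocol_def by auto
  then obtain \<alpha> where \<alpha>: "\<alpha> \<in> R" "fst \<alpha> = r" by (auto simp: reactions_of_def)
  have app: "applicable \<alpha> c" using \<alpha> X by (auto simp: applicable_def le_fun_def r_def)
  have "(\<Prod>A\<in>UNIV. real (c A choose fst \<alpha> A)) = (\<Prod>A\<in>UNIV. if A = X then real (c X) else 1)"
    by (intro prod.cong) (auto simp: \<alpha> r_def)
  then have "propensity R \<phi> c \<alpha> = real (c X) / real (card (reactions_of R r))"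
    by (simp add: propensity_def \<alpha> nr prod.delta)
  also have "\<dots> \<ge> 1 / real (card R)"
  proof (rule frac_le)
    have "reactions_of R r \<subseteq> R" by (auto simp: reactions_of_def)
    moreover from this have "finite (reactions_of R r)" using fin by (rule finite_subset)
    ultimately show "0 < real (card (reactions_of R r))" "real (card (reactions_of R r)) \<le> real (card R)"
      using \<open>reactions_of R r \<noteq> {}\<close> fin by (auto simp: card_gt_0_iff card_mono)
  qed (use X in auto)
  finally show ?thesis using \<alpha> app unfolding enabled_def by blast
qed

lemma card_reactions_pos:
  fixes R :: "('s::finite) reaction set"
  assumes "crn_protocol R"
  shows "0 < card R"
proof -
  have "1 \<le> norm1 (\<lambda>_::'s. 1::nat)" by (simp add: norm1_def Suc_leI)
  then obtain \<alpha> where "\<alpha> \<in> R" using exists_enabled_propensity_ge[OF assms] unfolding enabled_def by blast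
  then show ?thesis using assms by (auto simp: crn_protocol_def card_gt_0_iff)
qed

text \<open>Round robin over a list of all reactions, falling back to an arbitrary enabled reaction.\<close>

lemma weakly_fair_execution_exists:
  assumes prot: "crn_protocol R" and d: "1 \<le> norm1 d"
  shows "\<exists>cs as. execution R d cs as \<and> weakly_fair R cs as"
proof -
  have fin: "finite R" using prot by (simp add: crn_protocol_def)
  obtain rl where rl: "set rl = R" using finite_list[OF fin] by blast
  have m: "0 < length rl" using rl card_reactions_pos[OF prot] by (cases rl) auto
  define pick where "pick t c = (if applicable (rl ! (t mod length rl)) c then rl ! (t mod length rl)
                                 else (SOME \<alpha>. enabled R c \<alpha>))" for t c
  define cs where "cs = rec_nat d (\<lambda>t c. result (pick t c) c)"
  define as where "as t = pick t (cs t)" for t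
  have pick: "enabled R c (pick t c)" if "1 \<le> norm1 c" for t c
  proof -
    have "\<exists>\<alpha>. enabled R c \<alpha>" using exists_enabled_propensity_ge[OF prot that] by blast
    then have some: "enabled R c (SOME \<alpha>. enabled R c \<alpha>)" by (rule someI_ex)
    show ?thesis
    proof (cases "applicable (rl ! (t mod length rl)) c")
      case True
      have "rl ! (t mod length rl) \<in> R" using rl m by (metis nth_mem mod_less_divisor)
      with True show ?thesis by (simp add: pick_def enabled_def)
    qed (use some in \<open>simp add: pick_def\<close>)
  qed
  have cs_Suc: "cs (Suc t) = result (as t) (cs t)" for t by (simp add: cs_def as_def)
  have nonempty: "1 \<le> norm1 (cs t)" for t
  proof (induction t)
    case (Suc t)
    have "norm1 (cs t) \<le> norm1 (cs (Suc t))"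
      using norm1_le_result[OF prot pick[OF Suc.IH]] by (simp add: cs_Suc as_def)
    with Suc.IH show ?case by linarith
  qed (use d in \<open>simp add: cs_def\<close>)
  have "execution R d cs as"
    using pick[OF nonempty] unfolding execution_def enabled_def by (simp add: cs_Suc as_def cs_def)
  moreover have "weakly_fair R cs as"
    unfolding weakly_fair_def
  proof (intro allI ballI impI)
    fix t \<alpha> assume "\<alpha> \<in> R"
    then obtain j where j: "j < length rl" "rl ! j = \<alpha>" using rl by (metis in_set_conv_nth)
    then obtain i where "(t + i) mod length rl = j" using exists_mod_eq_in_window by blast
    then show "\<exists>t'\<ge>t. as t' = \<alpha> \<or> \<not> applicable \<alpha> (cs t')"
      using j by (intro exI[of _ "t + i"]) (auto simp: as_def pick_def)
  qed
  ultimately show ?thesis by blast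
qed

section \<open>Rounds\<close>

lemma tau_exists:
  assumes wf: "weakly_fair R cs as" and QR: "Q \<subseteq> R" and fin: "finite R"
  shows "\<exists>s. t < s \<and> (as (s - 1) \<in> Q \<or> Q \<subseteq> (\<Union>t'\<in>{t..s}. inapp R (cs t')))"
proof (cases "\<exists>t'\<ge>t. as t' \<in> Q")
  case True
  then obtain t' where "t' \<ge> t" "as t' \<in> Q" by blast
  then show ?thesis by (intro exI[of _ "Suc t'"]) auto
next
  case False
  have "\<exists>t'\<ge>t. \<alpha> \<in> inapp R (cs t')" if "\<alpha> \<in> Q" for \<alpha>
  proof (cases "applicable \<alpha> (cs t)")
    case True
    moreover have "\<alpha> \<in> R" using that QR by blast
    ultimately obtain t' where "t' \<ge> t" "as t' = \<alpha> \<or> \<not> applicable \<alpha> (cs t')"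
      using wf unfolding weakly_fair_def by blast
    moreover have "as t' \<noteq> \<alpha>" using False that \<open>t' \<ge> t\<close> by auto
    ultimately show ?thesis using that QR by (intro exI[of _ t']) (auto simp: inapp_def)
  next
    case False
    then show ?thesis using that QR by (intro exI[of _ t]) (auto simp: inapp_def)
  qed
  then obtain T where T: "\<forall>\<alpha>\<in>Q. t \<le> T \<alpha> \<and> \<alpha> \<in> inapp R (cs (T \<alpha>))" by metis
  have fQ: "finite Q" using QR fin finite_subset by blast
  define s where "s = Suc (Max (insert t (T ` Q)))"
  have "T \<alpha> \<le> Max (insert t (T ` Q))" if "\<alpha> \<in> Q" for \<alpha>
    using fQ that by (intro Max_ge) auto
  then have "T \<alpha> \<in> {t..s}" if "\<alpha> \<in> Q" for \<alpha>
    using T that unfolding s_def by (simp add: le_SucI)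
  then have "Q \<subseteq> (\<Union>t'\<in>{t..s}. inapp R (cs t'))" using T by blast
  moreover have "t < s" using fQ unfolding s_def by (simp add: le_imp_less_Suc)
  ultimately show ?thesis by blast
qed

lemma tau_gt:
  assumes "weakly_fair R cs as" "Q \<subseteq> R" "finite R"
  shows "t < tau R cs as t Q"
  using LeastI_ex[OF tau_exists[OF assms, of t]] unfolding tau_def by blast

lemma tau_le:
  assumes "t < s" "as (s - 1) \<in> Q \<or> Q \<subseteq> (\<Union>t'\<in>{t..s}. inapp R (cs t'))"
  shows "tau R cs as t Q \<le> s"
  unfolding tau_def by (rule Least_le) (use assms in blast)

lemma tau_le_window:
  assumes "0 < w"
    and "(\<exists>t'. t \<le> t' \<and> t' < t + w \<and> as t' \<in> Q) \<or>
         (\<forall>\<alpha>\<in>Q. \<exists>t'. t \<le> t' \<and> t' < t + w \<and> \<alpha> \<in> inapp R (cs t'))"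
  shows "tau R cs as t Q \<le> t + w"
  using assms(2)
proof
  assume "\<exists>t'. t \<le> t' \<and> t' < t + w \<and> as t' \<in> Q"
  then obtain t' where "t \<le> t'" "t' < t + w" "as t' \<in> Q" by blast
  then have "tau R cs as t Q \<le> Suc t'" by (intro tau_le) auto
  then show ?thesis using \<open>t' < t + w\<close> by linarith
next
  assume "\<forall>\<alpha>\<in>Q. \<exists>t'. t \<le> t' \<and> t' < t + w \<and> \<alpha> \<in> inapp R (cs t')"
  then have "Q \<subseteq> (\<Union>t'\<in>{t..t + w}. inapp R (cs t'))" by fastforce
  then show ?thesis using assms(1) by (intro tau_le) auto
qed

lemma rstart_Suc_gt:
  assumes "weakly_fair R cs as" "runtime_policy R \<rho>" "finite R"
  shows "\<sigma> (rstart R cs as \<rho> \<sigma> i) < rstart R cs as \<rho> \<sigma> (Suc i)"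
proof -
  have "\<rho> c \<subseteq> R" for c using assms(2) by (auto simp: runtime_policy_def NV_def)
  then show ?thesis using tau_gt[OF assms(1) _ assms(3)] by simp
qed

lemma rstart_Suc_gt_rstart:
  assumes "weakly_fair R cs as" "runtime_policy R \<rho>" "skipping_policy \<sigma>" "finite R"
  shows "rstart R cs as \<rho> \<sigma> i < rstart R cs as \<rho> \<sigma> (Suc i)"
  using rstart_Suc_gt[OF assms(1,2,4)] assms(3) unfolding skipping_policy_def
  by (meson le_less_trans)

lemma rstart_ge:
  assumes "weakly_fair R cs as" "runtime_policy R \<rho>" "skipping_policy \<sigma>" "finite R"
  shows "i \<le> rstart R cs as \<rho> \<sigma> i"
proof (induction i)
  case (Suc i)
  then show ?case using rstart_Suc_gt_rstart[OF assms, of i] by linarith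
qed simp

lemma rstart_mono:
  assumes "weakly_fair R cs as" "runtime_policy R \<rho>" "skipping_policy \<sigma>" "finite R"
  shows "mono (rstart R cs as \<rho> \<sigma>)"
  using rstart_Suc_gt_rstart[OF assms] by (intro mono_iff_le_Suc[THEN iffD2]) (simp add: less_imp_le)

lemma less_Least_rstart:
  assumes "weakly_fair R cs as" "runtime_policy R \<rho>" "skipping_policy \<sigma>" "finite R"
    and "rstart R cs as \<rho> \<sigma> i < tstar"
  shows "i < (LEAST i. tstar \<le> rstart R cs as \<rho> \<sigma> i)"
proof (rule ccontr)
  let ?i = "LEAST i. tstar \<le> rstart R cs as \<rho> \<sigma> i"
  assume "\<not> i < ?i"
  then have "rstart R cs as \<rho> \<sigma> ?i \<le> rstart R cs as \<rho> \<sigma> i"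
    using rstart_mono[OF assms(1-4)] by (simp add: monoD)
  moreover have "tstar \<le> rstart R cs as \<rho> \<sigma> ?i"
    using rstart_ge[OF assms(1-4), of tstar] by (rule LeastI)
  ultimately show False using assms(5) by linarith
qed

section \<open>Expected duration of a round\<close>

lemma ptot_split:
  assumes "finite R"
  shows "ptot R \<phi> c = (\<Sum>\<alpha>\<in>{\<alpha>\<in>R. applicable \<alpha> c \<and> \<not> P \<alpha>}. propensity R \<phi> c \<alpha>)
                    + (\<Sum>\<alpha>\<in>{\<alpha>\<in>R. applicable \<alpha> c \<and> P \<alpha>}. propensity R \<phi> c \<alpha>)"
proof -
  have "ptot R \<phi> c = (\<Sum>\<alpha>\<in>{\<alpha>\<in>R. applicable \<alpha> c}. propensity R \<phi> c \<alpha>)"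
    unfolding ptot_def using assms
    by (intro sum.mono_neutral_right ballI) (auto simp: propensity_eq_0_if_not_applicable)
  also have "{\<alpha>\<in>R. applicable \<alpha> c} =
             {\<alpha>\<in>R. applicable \<alpha> c \<and> \<not> P \<alpha>} \<union> {\<alpha>\<in>R. applicable \<alpha> c \<and> P \<alpha>}" by blast
  finally show ?thesis using assms by (simp add: sum.union_disjoint disjoint_iff)
qed

lemma TC_ge_inverse_ptot: "ennreal (1 / ptot R \<phi> c) \<le> TC R \<phi> Q c"
proof -
  have "TCk R \<phi> Q (Suc 0) c (Q - inapp R c) = ennreal (1 / ptot R \<phi> c)"
    by (simp only: TCk.simps if_cancel mult_zero_right sum.neutral_const add_0_right)
  moreover have "TCk R \<phi> Q (Suc 0) c (Q - inapp R c) \<le> TC R \<phi> Q c"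
    unfolding TC_def by (rule SUP_upper) simp
  ultimately show ?thesis by simp
qed

text \<open>One step of the escape argument: a step costs expected time \<open>1/P\<close> and leaves the trap
  with probability at most \<open>h/P\<close>.\<close>

lemma escape_step_bound:
  fixes P Pm h S :: real
  assumes P: "0 < P" "P \<le> Pm" and h: "0 < h" and S: "P - h \<le> S"
  shows "min (1/(2*h)) (real (Suc k) / (2*Pm)) \<le> 1/P + S/P * min (1/(2*h)) (real k / (2*Pm))"
proof -
  define g where "g = min (1/(2*h)) (real k / (2*Pm))"
  have g: "0 \<le> g" "h * g \<le> 1/2" using P h by (auto simp: g_def min_def field_simps)
  have "min (1/(2*h)) (real (Suc k) / (2*Pm)) \<le> g + 1/(2*Pm)"
    using P unfolding g_def by (auto simp: min_def field_simps)
  also have "\<dots> \<le> g + (1/2)/P"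
    using P by (simp add: field_simps)
  also have "\<dots> \<le> g + (1 - h*g)/P"
    using P g by (intro add_left_mono divide_right_mono) auto
  also have "\<dots> = 1/P + (P - h)/P * g" using P by (simp add: field_simps)
  also have "\<dots> \<le> 1/P + S/P * g"
    using P S g by (simp add: divide_right_mono mult_right_mono)
  finally show ?thesis by (simp add: g_def)
qed

lemma TCk_Suc_ge:
  assumes fin: "finite R" and \<phi>: "0 < \<phi>" and P: "0 < ptot R \<phi> e" and g: "0 \<le> g"
    and S: "S \<subseteq> R"
    and continue: "\<And>\<alpha>. \<alpha> \<in> S \<Longrightarrow> \<alpha> \<notin> Q \<and> Qr - inapp R (result \<alpha> e) \<noteq> {} \<and>
        ennreal g \<le> TCk R \<phi> Q k (result \<alpha> e) (Qr - inapp R (result \<alpha> e))"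
  shows "ennreal (1 / ptot R \<phi> e + (\<Sum>\<alpha>\<in>S. propensity R \<phi> e \<alpha>) / ptot R \<phi> e * g)
         \<le> TCk R \<phi> Q (Suc k) e Qr"
proof -
  define P where "P = ptot R \<phi> e"
  define p where "p \<alpha> = propensity R \<phi> e \<alpha>" for \<alpha>
  define f where "f \<alpha> = ennreal (p \<alpha> / P) *
          (if \<alpha> \<in> Q \<or> Qr - inapp R (result \<alpha> e) = {} then 0
           else TCk R \<phi> Q k (result \<alpha> e) (Qr - inapp R (result \<alpha> e)))" for \<alpha>
  have p: "0 \<le> p \<alpha>" for \<alpha> using \<phi> by (simp add: p_def propensity_nonneg)
  have "ennreal (p \<alpha> / P * g) \<le> f \<alpha>" if "\<alpha> \<in> S" for \<alpha>
  proof -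
    have "ennreal (p \<alpha> / P * g) = ennreal (p \<alpha> / P) * ennreal g"
      using g by (rule ennreal_mult'')
    also have "\<dots> \<le> f \<alpha>"
      using continue[OF that] by (auto simp: f_def intro: mult_left_mono)
    finally show ?thesis .
  qed
  then have "(\<Sum>\<alpha>\<in>S. ennreal (p \<alpha> / P * g)) \<le> (\<Sum>\<alpha>\<in>R. f \<alpha>)"
    using fin S by (intro order_trans[OF sum_mono sum_mono2]) auto
  then have "ennreal ((\<Sum>\<alpha>\<in>S. p \<alpha>) / P * g) \<le> (\<Sum>\<alpha>\<in>R. f \<alpha>)"
    using p P g by (simp add: P_def sum_ennreal sum_divide_distrib[symmetric] sum_distrib_right[symmetric])
  moreover have "ennreal (1/P + (\<Sum>\<alpha>\<in>S. p \<alpha>) / P * g) = ennreal (1/P) + ennreal ((\<Sum>\<alpha>\<in>S. p \<alpha>) / P * g)"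
    using P g sum_nonneg[of S p] p by (intro ennreal_plus) (simp_all add: P_def)
  ultimately show ?thesis by (simp add: f_def P_def p_def add_left_mono)
qed

lemma TCk_ge_escape:
  assumes fin: "finite R" and \<phi>: "0 < \<phi>"
    and hazard: "\<forall>e\<in>B. (\<Sum>\<alpha>\<in>{\<alpha>\<in>R. applicable \<alpha> e \<and> (\<alpha> \<in> Q \<or> result \<alpha> e \<notin> B)}. propensity R \<phi> e \<alpha>) \<le> h"
    and h: "0 < h"
    and Pm: "\<forall>e\<in>B. 0 < ptot R \<phi> e \<and> ptot R \<phi> e \<le> Pm"
    and \<beta>: "\<forall>e\<in>B. applicable \<beta> e"
  shows "e \<in> B \<Longrightarrow> \<beta> \<in> Qr \<Longrightarrow> ennreal (min (1/(2*h)) (real k / (2*Pm))) \<le> TCk R \<phi> Q k e Qr"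
proof (induction k arbitrary: e Qr)
  case 0
  then show ?case using h by simp
next
  case (Suc k)
  define g where "g = min (1/(2*h)) (real k / (2*Pm))"
  define stay where "stay = {\<alpha>\<in>R. applicable \<alpha> e \<and> \<not> (\<alpha> \<in> Q \<or> result \<alpha> e \<notin> B)}"
  have P: "0 < ptot R \<phi> e" "ptot R \<phi> e \<le> Pm" using Pm Suc.prems by auto
  have g: "0 \<le> g" using P h by (simp add: g_def)
  have "ptot R \<phi> e - h \<le> (\<Sum>\<alpha>\<in>stay. propensity R \<phi> e \<alpha>)"
    using ptot_split[OF fin, of \<phi> e "\<lambda>\<alpha>. \<alpha> \<in> Q \<or> result \<alpha> e \<notin> B"] hazard Suc.prems
    by (simp add: stay_def)
  then have "min (1/(2*h)) (real (Suc k) / (2*Pm))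
      \<le> 1 / ptot R \<phi> e + (\<Sum>\<alpha>\<in>stay. propensity R \<phi> e \<alpha>) / ptot R \<phi> e * g"
    unfolding g_def by (rule escape_step_bound[OF P h])
  then have "ennreal (min (1/(2*h)) (real (Suc k) / (2*Pm)))
      \<le> ennreal (1 / ptot R \<phi> e + (\<Sum>\<alpha>\<in>stay. propensity R \<phi> e \<alpha>) / ptot R \<phi> e * g)"
    by (rule ennreal_leI)
  also have "\<dots> \<le> TCk R \<phi> Q (Suc k) e Qr"
  proof (rule TCk_Suc_ge[OF fin \<phi> P(1) g])
    fix \<alpha> assume "\<alpha> \<in> stay"
    then have \<alpha>: "\<alpha> \<notin> Q" "result \<alpha> e \<in> B" by (auto simp: stay_def)
    then have "\<beta> \<in> Qr - inapp R (result \<alpha> e)" using \<beta> Suc.prems by (auto simp: inapp_def)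
    then show "\<alpha> \<notin> Q \<and> Qr - inapp R (result \<alpha> e) \<noteq> {} \<and>
        ennreal g \<le> TCk R \<phi> Q k (result \<alpha> e) (Qr - inapp R (result \<alpha> e))"
      using \<alpha> Suc.IH[OF \<alpha>(2)] by (auto simp: g_def)
  qed (auto simp: stay_def)
  finally show ?case .
qed

lemma TC_ge_escape:
  assumes fin: "finite R" and \<phi>: "0 < \<phi>"
    and hazard: "\<forall>e\<in>B. (\<Sum>\<alpha>\<in>{\<alpha>\<in>R. applicable \<alpha> e \<and> (\<alpha> \<in> Q \<or> result \<alpha> e \<notin> B)}. propensity R \<phi> e \<alpha>) \<le> h"
    and h: "0 < h"
    and B: "finite B" "\<forall>e\<in>B. 0 < ptot R \<phi> e"
    and \<beta>: "\<forall>e\<in>B. applicable \<beta> e" "\<beta> \<in> Q"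
    and e: "e \<in> B"
  shows "ennreal (1/(2*h)) \<le> TC R \<phi> Q e"
proof -
  define Pm where "Pm = Max (ptot R \<phi> ` B)"
  have Pm: "\<forall>e\<in>B. 0 < ptot R \<phi> e \<and> ptot R \<phi> e \<le> Pm"
    using B unfolding Pm_def by auto
  then have "0 < Pm" using e by fastforce
  define k where "k = nat \<lceil>Pm / h\<rceil>"
  have "Pm / h \<le> real k" unfolding k_def by linarith
  then have "min (1/(2*h)) (real k / (2*Pm)) = 1/(2*h)"
    using h \<open>0 < Pm\<close> by (simp add: min_def field_simps)
  moreover have "\<beta> \<in> Q - inapp R e" using \<beta> e by (auto simp: inapp_def)
  ultimately have "ennreal (1/(2*h)) \<le> TCk R \<phi> Q k e (Q - inapp R e)"
    using TCk_ge_escape[OF fin \<phi> hazard h Pm \<beta>(1) e] by metis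
  also have "\<dots> \<le> TC R \<phi> Q e" unfolding TC_def by (rule SUP_upper) simp
  finally show ?thesis .
qed

definition fast :: "('s::finite) reaction set \<Rightarrow> real \<Rightarrow> real \<Rightarrow> 's config \<Rightarrow> 's reaction \<Rightarrow> bool" where
  "fast R \<phi> s c \<alpha> \<longleftrightarrow> enabled R c \<alpha> \<and> s / \<phi> < propensity R \<phi> c \<alpha>"

definition trapping :: "('s::finite) reaction set \<Rightarrow> real \<Rightarrow> real \<Rightarrow> 's config set \<Rightarrow> 's reaction set \<Rightarrow> bool" where
  "trapping R \<phi> s B Q \<longleftrightarrow> (\<exists>\<beta>\<in>Q. \<forall>e\<in>B. applicable \<beta> e) \<and> (\<forall>\<alpha>\<in>Q. \<forall>e\<in>B. \<not> fast R \<phi> s e \<alpha>)"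

lemma ptot_pos_if_fast:
  assumes "finite R" "0 < \<phi>" "0 \<le> s" "fast R \<phi> s c \<alpha>"
  shows "0 < ptot R \<phi> c"
proof -
  have "0 \<le> s / \<phi>" using assms(2,3) by simp
  moreover have "propensity R \<phi> c \<alpha> \<le> ptot R \<phi> c"
    using assms(1,2,4) by (intro propensity_le_ptot) (auto simp: fast_def enabled_def)
  ultimately show ?thesis using assms(4) unfolding fast_def by linarith
qed

lemma escape_hazard_le:
  assumes fin: "finite R" and s: "0 \<le> s" "0 < \<phi>"
    and closed: "\<forall>\<alpha>. fast R \<phi> s e \<alpha> \<longrightarrow> result \<alpha> e \<in> B"
    and slow: "\<forall>\<alpha>\<in>Q. \<not> fast R \<phi> s e \<alpha>"
  shows "(\<Sum>\<alpha>\<in>{\<alpha>\<in>R. applicable \<alpha> e \<and> (\<alpha> \<in> Q \<or> result \<alpha> e \<notin> B)}. propensity R \<phi> e \<alpha>)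
         \<le> real (card R) * s / \<phi>"
proof -
  let ?X = "{\<alpha>\<in>R. applicable \<alpha> e \<and> (\<alpha> \<in> Q \<or> result \<alpha> e \<notin> B)}"
  have "propensity R \<phi> e \<alpha> \<le> s / \<phi>" if "\<alpha> \<in> ?X" for \<alpha>
  proof -
    have "\<not> fast R \<phi> s e \<alpha>" using that closed slow by blast
    then show ?thesis using that by (auto simp: fast_def enabled_def)
  qed
  then have "(\<Sum>\<alpha>\<in>?X. propensity R \<phi> e \<alpha>) \<le> real (card ?X) * (s / \<phi>)"
    by (rule sum_bounded_above)
  also have "\<dots> \<le> real (card R) * (s / \<phi>)"
    using card_mono[OF fin, of ?X] s by (intro mult_right_mono) auto
  finally show ?thesis by simp
qed

lemma TC_ge_trapping:
  assumes fin: "finite R" and \<phi>: "0 < \<phi>" and s: "0 < s" and R: "0 < card R"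
    and B: "finite B" "\<forall>e\<in>B. \<exists>\<alpha>. fast R \<phi> s e \<alpha>"
    and closed: "\<forall>e\<in>B. \<forall>\<alpha>. fast R \<phi> s e \<alpha> \<longrightarrow> result \<alpha> e \<in> B"
    and trap: "trapping R \<phi> s B Q"
    and e: "e \<in> B"
  shows "ennreal (\<phi> / (2 * real (card R) * s)) \<le> TC R \<phi> Q e"
proof -
  define h where "h = real (card R) * s / \<phi>"
  have "0 < h" using R s \<phi> by (simp add: h_def)
  obtain \<beta> where "\<beta> \<in> Q" "\<forall>e\<in>B. applicable \<beta> e" using trap by (auto simp: trapping_def)
  moreover have "\<forall>e\<in>B. 0 < ptot R \<phi> e" using B(2) ptot_pos_if_fast[OF fin \<phi> less_imp_le[OF s]] by blast
  moreover have "\<forall>e\<in>B. (\<Sum>\<alpha>\<in>{\<alpha>\<in>R. applicable \<alpha> e \<and> (\<alpha> \<in> Q \<or> result \<alpha> e \<notin> B)}. propensity R \<phi> e \<alpha>) \<le> h"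
    using escape_hazard_le[OF fin _ \<phi>] s closed trap by (simp add: h_def trapping_def)
  ultimately have "ennreal (1/(2*h)) \<le> TC R \<phi> Q e"
    using TC_ge_escape[OF fin \<phi> _ \<open>0 < h\<close> B(1)] e by blast
  then show ?thesis using \<phi> by (simp add: h_def field_simps)
qed

section \<open>Sweeping executions\<close>

lemma covering_cycle_exists:
  fixes R :: "('s::finite) reaction set"
  assumes fin: "finite R" and E: "\<And>c \<alpha>. E c \<alpha> \<Longrightarrow> \<alpha> \<in> R"
    and strong: "\<forall>e\<in>B. \<forall>e'\<in>B. (edge_step E)\<^sup>*\<^sup>* e e'"
    and closed: "\<forall>e\<in>B. \<forall>\<alpha>. E e \<alpha> \<longrightarrow> result \<alpha> e \<in> B"
    and B: "finite B" "\<forall>e\<in>B. \<exists>\<alpha>. E e \<alpha>" and d: "d \<in> B"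
  obtains w cw aw where "0 < w" "walk E d d w cw aw" "\<forall>j\<le>w. cw j \<in> B"
    "\<forall>e\<in>B. \<forall>\<alpha>. E e \<alpha> \<longrightarrow> (\<exists>j<w. cw j = e \<and> aw j = \<alpha>)"
proof -
  define F where "F = {(e, \<alpha>). e \<in> B \<and> E e \<alpha>}"
  have "F \<subseteq> B \<times> R" using E by (auto simp: F_def)
  then have "finite F" using finite_cartesian_product[OF B(1) fin] by (rule finite_subset)
  moreover have "\<forall>(e, \<alpha>)\<in>F. e \<in> B \<and> E e \<alpha>" by (simp add: F_def)
  ultimately have "\<exists>w cw aw. walk E d d w cw aw \<and> (\<forall>(e, \<alpha>)\<in>F. \<exists>j<w. cw j = e \<and> aw j = \<alpha>)"
    by (rule walk_covering_edges[OF strong closed d _ _ d])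
  then obtain w cw aw where cycle: "walk E d d w cw aw"
      and cover: "\<forall>(e, \<alpha>)\<in>F. \<exists>j<w. cw j = e \<and> aw j = \<alpha>"
    by blast
  have cover': "\<exists>j<w. cw j = e \<and> aw j = \<alpha>" if "e \<in> B" "E e \<alpha>" for e \<alpha>
  proof -
    have "(e, \<alpha>) \<in> F" using that by (simp add: F_def)
    from bspec[OF cover this] show ?thesis by (simp only: prod.case)
  qed
  obtain \<alpha> where "E d \<alpha>" using B(2) d by auto
  then have "0 < w" using cover'[OF d] by fastforce
  moreover have "\<forall>j\<le>w. cw j \<in> B"
    using walk_imp_rtranclp_edge_step(1)[OF cycle] d closed by (blast intro: rtranclp_edge_step_closed)
  ultimately show thesis using that cycle cover' by blast
qed

lemma sweeping_execution_exists:
  fixes R :: "('s::finite) reaction set" and M :: nat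
  assumes prot: "crn_protocol R"
    and E: "\<And>c \<alpha>. E c \<alpha> \<Longrightarrow> enabled R c \<alpha>"
    and strong: "\<forall>e\<in>B. \<forall>e'\<in>B. (edge_step E)\<^sup>*\<^sup>* e e'"
    and closed: "\<forall>e\<in>B. \<forall>\<alpha>. E e \<alpha> \<longrightarrow> result \<alpha> e \<in> B"
    and B: "finite B" "\<forall>e\<in>B. \<exists>\<alpha>. E e \<alpha>"
    and d: "d \<in> B" "reach R c0 d" "1 \<le> norm1 d"
  shows "\<exists>cs as ta w. 0 < w \<and> execution R c0 cs as \<and> weakly_fair R cs as \<and>
     (\<forall>t \<le> ta + M * w. reach R (cs t) d) \<and>
     (\<forall>t. ta \<le> t \<longrightarrow> t < ta + M * w \<longrightarrow> cs t \<in> B) \<and>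
     (\<forall>t. ta \<le> t \<longrightarrow> t + w \<le> ta + M * w \<longrightarrow>
        (\<forall>e\<in>B. \<forall>\<alpha>. E e \<alpha> \<longrightarrow> (\<exists>t'. t \<le> t' \<and> t' < t + w \<and> cs t' = e \<and> as t' = \<alpha>)))"
proof -
  have "finite R" using prot by (simp add: crn_protocol_def)
  then obtain w cw aw where w: "0 < w" and cycle: "walk E d d w cw aw" and cw_B: "\<forall>j\<le>w. cw j \<in> B"
    and cover: "\<forall>e\<in>B. \<forall>\<alpha>. E e \<alpha> \<longrightarrow> (\<exists>j<w. cw j = e \<and> aw j = \<alpha>)"
    using covering_cycle_exists[OF _ _ strong closed B d(1)] E unfolding enabled_def by metis
  obtain ta pcs pas where pre: "walk (enabled R) c0 d ta pcs pas"
    using d(2) rtranclp_edge_step_imp_walk unfolding reach_eq_rtranclp_edge_step by blast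
  define tb where "tb = ta + M * w"
  define ccs where "ccs = splice ta pcs (\<lambda>i. cw (i mod w))"
  define cas where "cas = splice ta pas (\<lambda>i. aw (i mod w))"
  have prefix: "walk (enabled R) c0 d tb ccs cas"
    unfolding tb_def ccs_def cas_def
    by (rule walk_append[OF pre walk_mono[OF walk_repeat[OF cycle w] E]])
  obtain fcs fas where fair: "execution R d fcs fas" "weakly_fair R fcs fas"
    using weakly_fair_execution_exists[OF prot d(3)] by blast
  define cs where "cs = splice tb ccs fcs"
  define as where "as = splice tb cas fas"
  have "execution R c0 cs as" "weakly_fair R cs as"
    unfolding cs_def as_def by (rule execution_splice[OF prefix fair(1)] weakly_fair_splice[OF fair(2)])+
  moreover have "reach R (cs t) d" if "t \<le> tb" for t
  proof -
    have "cs t = ccs t"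
      using that prefix fair(1) by (cases "t = tb") (auto simp: cs_def splice_def walk_def execution_def)
    then show ?thesis using reach_if_walk(2)[OF prefix _ that] by simp
  qed
  moreover have periodic: "\<forall>t. ta \<le> t \<longrightarrow> t < tb \<longrightarrow> cs t = cw ((t - ta) mod w) \<and> as t = aw ((t - ta) mod w)"
    by (simp add: cs_def as_def ccs_def cas_def splice_def tb_def)
  moreover have "cs t \<in> B" if "ta \<le> t" "t < tb" for t
    using periodic that cw_B w by simp
  moreover have "\<exists>t'. t \<le> t' \<and> t' < t + w \<and> cs t' = e \<and> as t' = \<alpha>"
    if t: "ta \<le> t" "t + w \<le> tb" and e: "e \<in> B" "E e \<alpha>" for t e \<alpha>
  proof -
    obtain j where "j < w" "cw j = e" "aw j = \<alpha>" using cover e by blast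
    then show ?thesis using periodic_window[OF \<open>j < w\<close> periodic t] by auto
  qed
  ultimately show ?thesis using w unfolding tb_def by blast
qed

lemma sum_ge_first_rounds:
  fixes T :: "nat \<Rightarrow> ennreal"
  assumes "\<forall>i<M. (\<forall>j<i. \<not> P j) \<longrightarrow> i < N \<and> c \<le> T i \<and> (P i \<longrightarrow> L \<le> T i)"
  shows "min L (of_nat M * c) \<le> (\<Sum>i<N. T i)"
proof (cases "\<exists>i<M. P i")
  case True
  then obtain i where i: "i < M \<and> P i" "\<forall>m<i. \<not> (m < M \<and> P m)"
    using exists_least_iff[of "\<lambda>i. i < M \<and> P i"] by blast
  then have "\<forall>j<i. \<not> P j" by auto
  then have "L \<le> T i" "i < N" using assms i(1) by blast+
  moreover have "T i \<le> (\<Sum>i<N. T i)" using \<open>i < N\<close> by (intro member_le_sum) auto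
  ultimately show ?thesis by (simp add: min.coboundedI1)
next
  case False
  have first: "\<forall>i<M. i < N \<and> c \<le> T i"
  proof (intro allI impI)
    fix i assume "i < M"
    then have "\<forall>j<i. \<not> P j" using False by auto
    then show "i < N \<and> c \<le> T i" using assms \<open>i < M\<close> by blast
  qed
  then have "of_nat M * c \<le> (\<Sum>i<M. T i)"
    using sum_mono[of "{..<M}" "\<lambda>_. c" T] by simp
  also have "\<dots> \<le> (\<Sum>i<N. T i)"
    using first by (intro sum_mono2) (auto simp: subset_eq)
  finally show ?thesis by (simp add: min.coboundedI2)
qed

lemma tau_le_sweep:
  assumes Q: "Q \<subseteq> R" and w: "0 < w" and not_trapping: "\<not> trapping R \<phi> s B Q"
    and B: "\<forall>e\<in>B. \<exists>\<alpha>. fast R \<phi> s e \<alpha>"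
    and sweep: "\<forall>e\<in>B. \<forall>\<alpha>. fast R \<phi> s e \<alpha> \<longrightarrow> (\<exists>t'. t \<le> t' \<and> t' < t + w \<and> cs t' = e \<and> as t' = \<alpha>)"
  shows "tau R cs as t Q \<le> t + w"
proof (rule tau_le_window[OF w])
  consider "\<exists>\<alpha>\<in>Q. \<exists>e\<in>B. fast R \<phi> s e \<alpha>" | "\<forall>\<beta>\<in>Q. \<exists>e\<in>B. \<not> applicable \<beta> e"
    using not_trapping unfolding trapping_def by blast
  then show "(\<exists>t'. t \<le> t' \<and> t' < t + w \<and> as t' \<in> Q) \<or>
             (\<forall>\<alpha>\<in>Q. \<exists>t'. t \<le> t' \<and> t' < t + w \<and> \<alpha> \<in> inapp R (cs t'))"
  proof cases
    case 1
    then obtain \<alpha> e where "\<alpha> \<in> Q" "e \<in> B" "fast R \<phi> s e \<alpha>" by blast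
    moreover from this obtain t' where "t \<le> t'" "t' < t + w" "as t' = \<alpha>"
      using sweep by blast
    ultimately show ?thesis by blast
  next
    case 2
    have "\<exists>t'. t \<le> t' \<and> t' < t + w \<and> \<beta> \<in> inapp R (cs t')" if "\<beta> \<in> Q" for \<beta>
    proof -
      from 2 that obtain e where "e \<in> B" "\<not> applicable \<beta> e" by auto
      moreover obtain \<alpha> where "fast R \<phi> s e \<alpha>" using B \<open>e \<in> B\<close> by blast
      then obtain t' where "t \<le> t'" "t' < t + w" "cs t' = e"
        using sweep \<open>e \<in> B\<close> by blast
      then show ?thesis using that Q \<open>\<not> applicable \<beta> e\<close> by (intro exI[of _ t']) (auto simp: inapp_def)
    qed
    then show ?thesis by blast
  qed
qed

text \<open>With the skipping policy \<open>\<lambda>t. max t ta\<close>, the rounds during a sweeping phase that starts at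
  \<open>ta\<close> last at most one period \<open>w\<close> each, as long as no policy set is trapping.\<close>

lemma rstart_on_schedule:
  fixes R :: "('s::finite) reaction set" and cs :: "nat \<Rightarrow> 's config"
    and as :: "nat \<Rightarrow> 's reaction" and \<rho> :: "'s config \<Rightarrow> 's reaction set" and ta :: nat
  defines "u i \<equiv> max (rstart R cs as \<rho> (\<lambda>t. max t ta) i) ta"
  assumes wf: "weakly_fair R cs as" and rp: "runtime_policy R \<rho>" and fin: "finite R"
    and w: "0 < w" and B: "\<forall>e\<in>B. \<exists>\<alpha>. fast R \<phi> s e \<alpha>"
    and sweep: "\<forall>t. ta \<le> t \<longrightarrow> t + w \<le> ta + M * w \<longrightarrow>
        (\<forall>e\<in>B. \<forall>\<alpha>. fast R \<phi> s e \<alpha> \<longrightarrow> (\<exists>t'. t \<le> t' \<and> t' < t + w \<and> cs t' = e \<and> as t' = \<alpha>))"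
  shows "i < M \<Longrightarrow> \<forall>j<i. \<not> trapping R \<phi> s B (\<rho> (cs (u j))) \<Longrightarrow> u i \<le> ta + i * w"
proof (induction i)
  case (Suc i)
  then have ui: "u i \<le> ta + i * w" by simp
  have QR: "\<rho> c \<subseteq> R" for c using rp by (auto simp: runtime_policy_def NV_def)
  have "ta \<le> u i" by (simp add: u_def)
  moreover have "u i + w \<le> ta + M * w"
    using ui mult_le_mono1[of "Suc i" M w] Suc.prems(1) by simp
  ultimately have "\<forall>e\<in>B. \<forall>\<alpha>. fast R \<phi> s e \<alpha> \<longrightarrow> (\<exists>t'. u i \<le> t' \<and> t' < u i + w \<and> cs t' = e \<and> as t' = \<alpha>)"
    using sweep by simp
  then have "tau R cs as (u i) (\<rho> (cs (u i))) \<le> u i + w"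
    using Suc.prems(2) B by (intro tau_le_sweep[OF QR w]) auto
  moreover have "u (Suc i) = tau R cs as (u i) (\<rho> (cs (u i)))"
    using rstart_Suc_gt[OF wf rp fin, of "\<lambda>t. max t ta" i] by (simp add: u_def)
  ultimately show ?case using ui by simp
qed (simp add: u_def)

lemma rounds_cost_ge:
  fixes R :: "('s::finite) reaction set" and cs :: "nat \<Rightarrow> 's config"
    and as :: "nat \<Rightarrow> 's reaction" and \<rho> :: "'s config \<Rightarrow> 's reaction set" and ta :: nat
  defines "rs \<equiv> rstart R cs as \<rho> (\<lambda>t. max t ta)"
  assumes fin: "finite R" and wf: "weakly_fair R cs as" and rp: "runtime_policy R \<rho>"
    and \<phi>: "0 < \<phi>" and s: "0 < s" and R: "0 < card R"
    and B: "finite B" "\<forall>e\<in>B. \<exists>\<alpha>. fast R \<phi> s e \<alpha>"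
    and closed: "\<forall>e\<in>B. \<forall>\<alpha>. fast R \<phi> s e \<alpha> \<longrightarrow> result \<alpha> e \<in> B"
    and w: "0 < w"
    and inB: "\<forall>t. ta \<le> t \<longrightarrow> t < ta + M * w \<longrightarrow> cs t \<in> B"
    and sweep: "\<forall>t. ta \<le> t \<longrightarrow> t + w \<le> ta + M * w \<longrightarrow>
        (\<forall>e\<in>B. \<forall>\<alpha>. fast R \<phi> s e \<alpha> \<longrightarrow> (\<exists>t'. t \<le> t' \<and> t' < t + w \<and> cs t' = e \<and> as t' = \<alpha>))"
    and Pm: "\<forall>e\<in>B. ptot R \<phi> e \<le> Pm"
    and M: "\<phi> / (2 * real (card R) * s) \<le> real M / Pm"
    and tstar: "ta + M * w < tstar"
  shows "ennreal (\<phi> / (2 * real (card R) * s)) \<le>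
         (\<Sum>i<(LEAST i. tstar \<le> rs i). TC R \<phi> (\<rho> (cs (max (rs i) ta))) (cs (max (rs i) ta)))"
proof -
  define u where "u i = max (rs i) ta" for i
  define trapped where "trapped i \<longleftrightarrow> trapping R \<phi> s B (\<rho> (cs (u i)))" for i
  define T where "T i = TC R \<phi> (\<rho> (cs (u i))) (cs (u i))" for i
  define L where "L = \<phi> / (2 * real (card R) * s)"
  have sp: "skipping_policy (\<lambda>t. max t ta)" by (simp add: skipping_policy_def)
  have "\<forall>i<M. (\<forall>j<i. \<not> trapped j) \<longrightarrow>
      i < (LEAST i. tstar \<le> rs i) \<and> ennreal (1 / Pm) \<le> T i \<and> (trapped i \<longrightarrow> ennreal L \<le> T i)"
  proof (intro allI impI)
    fix i assume i: "i < M" "\<forall>j<i. \<not> trapped j"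
    have "u i \<le> ta + i * w"
      using rstart_on_schedule[OF wf rp fin w B(2) sweep i(1)] i(2)
      by (simp add: u_def rs_def trapped_def)
    moreover have "i * w < M * w" using i(1) w by simp
    ultimately have "u i < ta + M * w" by linarith
    then have e: "cs (u i) \<in> B" and "rs i < tstar" using inB tstar by (simp_all add: u_def)
    from \<open>rs i < tstar\<close> have "i < (LEAST i. tstar \<le> rs i)"
      unfolding rs_def by (rule less_Least_rstart[OF wf rp sp fin])
    obtain \<alpha> where "fast R \<phi> s (cs (u i)) \<alpha>" using B(2) e by auto
    then have "0 < ptot R \<phi> (cs (u i))" by (rule ptot_pos_if_fast[OF fin \<phi> less_imp_le[OF s]])
    then have "ennreal (1 / Pm) \<le> ennreal (1 / ptot R \<phi> (cs (u i)))"
      using Pm e by (intro ennreal_leI divide_left_mono) auto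
    then have "ennreal (1 / Pm) \<le> T i"
      unfolding T_def using TC_ge_inverse_ptot by (rule order_trans)
    moreover have "ennreal L \<le> T i" if "trapped i"
      using TC_ge_trapping[OF fin \<phi> s R B closed _ e] that by (simp add: trapped_def T_def L_def)
    ultimately show "i < (LEAST i. tstar \<le> rs i) \<and> ennreal (1 / Pm) \<le> T i \<and> (trapped i \<longrightarrow> ennreal L \<le> T i)"
      using \<open>i < (LEAST i. tstar \<le> rs i)\<close> by simp
  qed
  then have "min (ennreal L) (of_nat M * ennreal (1 / Pm)) \<le> (\<Sum>i<(LEAST i. tstar \<le> rs i). T i)"
    by (rule sum_ge_first_rounds)
  moreover have "of_nat M * ennreal (1 / Pm) = ennreal (real M / Pm)"
    by (simp add: ennreal_of_nat_eq_real_of_nat ennreal_mult'[symmetric])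
  moreover have "ennreal L \<le> ennreal (real M / Pm)" using M by (simp add: L_def ennreal_leI)
  ultimately show ?thesis by (simp add: L_def T_def u_def min_absorb1)
qed

section \<open>Pitfalls\<close>

lemma finite_norm1_le: "finite {c::('s::finite) config. norm1 c \<le> N}"
proof (rule finite_subset)
  show "{c::'s config. norm1 c \<le> N} \<subseteq> Pi\<^sub>E UNIV (\<lambda>_. {..N})"
  proof
    fix c :: "'s config" assume "c \<in> {c. norm1 c \<le> N}"
    then have "c A \<le> N" for A
      using member_le_sum[of A UNIV c] by (simp add: norm1_def)
    then show "c \<in> Pi\<^sub>E UNIV (\<lambda>_. {..N})" by (simp add: PiE_UNIV_domain)
  qed
qed (simp add: finite_PiE)

lemma finite_reachable:
  fixes R :: "('s::finite) reaction set"
  assumes "\<forall>c. reach R c0 c \<longrightarrow> real (norm1 c) \<le> K"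
  shows "finite {c. reach R c0 c}"
proof (rule finite_subset)
  show "{c. reach R c0 c} \<subseteq> {c. norm1 c \<le> nat \<lceil>K\<rceil>}"
  proof
    fix c assume "c \<in> {c. reach R c0 c}"
    then have "real (norm1 c) \<le> K" using assms by blast
    then have "int (norm1 c) \<le> \<lceil>K\<rceil>" using le_of_int_ceiling[of K] by linarith
    then show "c \<in> {c. norm1 c \<le> nat \<lceil>K\<rceil>}" by (simp add: le_nat_iff)
  qed
qed (rule finite_norm1_le)

lemma exists_bottom_scc:
  assumes "finite {e. r\<^sup>*\<^sup>* c e}"
  shows "\<exists>d. r\<^sup>*\<^sup>* c d \<and> (\<forall>e. r\<^sup>*\<^sup>* d e \<longrightarrow> r\<^sup>*\<^sup>* e d)"
proof -
  obtain d where d: "r\<^sup>*\<^sup>* c d"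
    and min: "\<forall>e. r\<^sup>*\<^sup>* c e \<longrightarrow> card {e'. r\<^sup>*\<^sup>* d e'} \<le> card {e'. r\<^sup>*\<^sup>* e e'}"
    using ex_has_least_nat[of "\<lambda>e. r\<^sup>*\<^sup>* c e" c "\<lambda>e. card {e'. r\<^sup>*\<^sup>* e e'}"] by blast
  have "r\<^sup>*\<^sup>* e d" if e: "r\<^sup>*\<^sup>* d e" for e
  proof -
    have sub: "{e'. r\<^sup>*\<^sup>* e e'} \<subseteq> {e'. r\<^sup>*\<^sup>* d e'}" using e by (auto intro: rtranclp_trans)
    have fin: "finite {e'. r\<^sup>*\<^sup>* d e'}"
      by (rule finite_subset[OF _ assms]) (use d in \<open>auto intro: rtranclp_trans\<close>)
    have "card {e'. r\<^sup>*\<^sup>* d e'} \<le> card {e'. r\<^sup>*\<^sup>* e e'}"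
      using min d e by (blast intro: rtranclp_trans)
    then have "{e'. r\<^sup>*\<^sup>* e e'} = {e'. r\<^sup>*\<^sup>* d e'}"
      using card_subset_eq[OF fin sub] card_mono[OF fin sub] by linarith
    then show ?thesis by auto
  qed
  then show ?thesis using d by blast
qed

lemma fast_exists:
  assumes "crn_protocol R" "1 \<le> norm1 c" "real (card R) * s < \<phi>" "0 < \<phi>"
  shows "\<exists>\<alpha>. fast R \<phi> s c \<alpha>"
proof -
  obtain \<alpha> where \<alpha>: "enabled R c \<alpha>" "1 / real (card R) \<le> propensity R \<phi> c \<alpha>"
    using exists_enabled_propensity_ge[OF assms(1,2)] by blast
  have "s / \<phi> < 1 / real (card R)"
    using assms(3,4) card_reactions_pos[OF assms(1)] by (simp add: field_simps)
  then have "s / \<phi> < propensity R \<phi> c \<alpha>" using \<alpha>(2) by linarith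
  then show ?thesis using \<alpha>(1) unfolding fast_def by blast
qed

lemma pitfall_fast_reach_not_target:
  assumes pf: "pitfall x R \<mu> Cr \<phi> s c0 c" and e: "(edge_step (fast R \<phi> s))\<^sup>*\<^sup>* c e"
  shows "e \<notin> target x R (Zset \<mu> Cr c0)"
proof
  assume target: "e \<in> target x R (Zset \<mu> Cr c0)"
  obtain k cs as where walk: "walk (fast R \<phi> s) c e k cs as"
    using rtranclp_edge_step_imp_walk[OF e] by blast
  have slow_step: "\<exists>i<k. propensity R \<phi> (cs i) (as i) \<le> s / \<phi>"
    if "cs 0 = c" "\<forall>i<k. as i \<in> R \<and> applicable (as i) (cs i) \<and> cs (Suc i) = result (as i) (cs i)"
      "cs k \<in> target x R (Zset \<mu> Cr c0)"
    using pf[unfolded pitfall_def, THEN conjunct2, THEN conjunct2, rule_format,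
        OF conjI[OF that(1) conjI[OF that(2,3)]]] .
  obtain i where "i < k" "propensity R \<phi> (cs i) (as i) \<le> s / \<phi>"
    using slow_step walk target by (auto simp: walk_def fast_def enabled_def)
  moreover have "s / \<phi> < propensity R \<phi> (cs i) (as i)"
    using walk \<open>i < k\<close> by (simp add: walk_def fast_def)
  ultimately show False by linarith
qed

lemma pitfall_fast_trap:
  fixes R :: "('s::finite) reaction set"
  assumes prot: "crn_protocol R" and fin_reach: "finite {c. reach R c0 c}"
    and pf: "pitfall x R \<mu> Cr \<phi> s c0 c" and big: "real (card R) * s < \<phi>" and \<phi>: "0 < \<phi>"
  obtains d B where "d \<in> B" "finite B" "reach R c0 d" "1 \<le> norm1 d"
    "\<forall>e\<in>B. \<forall>e'\<in>B. (edge_step (fast R \<phi> s))\<^sup>*\<^sup>* e e'"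
    "\<forall>e\<in>B. \<forall>\<alpha>. fast R \<phi> s e \<alpha> \<longrightarrow> result \<alpha> e \<in> B"
    "\<forall>e\<in>B. \<exists>\<alpha>. fast R \<phi> s e \<alpha>"
    "\<forall>e\<in>B. e \<notin> target x R (Zset \<mu> Cr c0)"
proof -
  let ?r = "edge_step (fast R \<phi> s)"
  have fast_reach: "reach R y z" if "?r\<^sup>*\<^sup>* y z" for y z
    using that by (rule reach_if_rtranclp_edge_step) (simp add: fast_def)
  have c: "reach R c0 c" and valid: "valid \<mu> Cr c0" using pf by (simp_all add: pitfall_def)
  have from_c: "reach R c0 e" if "?r\<^sup>*\<^sup>* c e" for e
    using c fast_reach[OF that] unfolding reach_def by (rule rtranclp_trans)
  have "finite {e. ?r\<^sup>*\<^sup>* c e}" by (rule finite_subset[OF _ fin_reach]) (auto intro: from_c)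
  then obtain d where d: "?r\<^sup>*\<^sup>* c d" "\<forall>e. ?r\<^sup>*\<^sup>* d e \<longrightarrow> ?r\<^sup>*\<^sup>* e d"
    using exists_bottom_scc[of ?r c] by auto
  define B where "B = {e. ?r\<^sup>*\<^sup>* d e}"
  have c_B: "?r\<^sup>*\<^sup>* c e" if "e \<in> B" for e
    using rtranclp_trans[OF d(1)] that unfolding B_def by simp
  have norm: "1 \<le> norm1 e" if "e \<in> B" for e
    using valid norm1_le_reach[OF prot from_c[OF c_B[OF that]]] by (simp add: valid_def)
  have no_target: "e \<notin> target x R (Zset \<mu> Cr c0)" if "e \<in> B" for e
    using pitfall_fast_reach_not_target[OF pf c_B[OF that]] .
  show thesis
  proof
    show "d \<in> B" "reach R c0 d" "1 \<le> norm1 d" using from_c d(1) norm by (auto simp: B_def)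
    show "finite B" by (rule finite_subset[OF _ fin_reach]) (use from_c c_B in blast)
    show "\<forall>e\<in>B. \<forall>e'\<in>B. ?r\<^sup>*\<^sup>* e e'"
    proof (intro ballI)
      fix e e' assume "e \<in> B" "e' \<in> B"
      then have "?r\<^sup>*\<^sup>* e d" "?r\<^sup>*\<^sup>* d e'" using d(2) by (auto simp: B_def)
      then show "?r\<^sup>*\<^sup>* e e'" by (rule rtranclp_trans)
    qed
    have "?r e (result \<alpha> e)" if "fast R \<phi> s e \<alpha>" for e \<alpha>
      using that unfolding edge_step_def by blast
    then show "\<forall>e\<in>B. \<forall>\<alpha>. fast R \<phi> s e \<alpha> \<longrightarrow> result \<alpha> e \<in> B"
      unfolding B_def by (simp add: rtranclp.rtrancl_into_rtrancl)
    show "\<forall>e\<in>B. \<exists>\<alpha>. fast R \<phi> s e \<alpha>" using fast_exists[OF prot norm big \<phi>] by blast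
    show "\<forall>e\<in>B. e \<notin> target x R (Zset \<mu> Cr c0)" using no_target by blast
  qed
qed

lemma Least_target_gt:
  fixes cs :: "nat \<Rightarrow> ('s::finite) config" and tb :: nat
  assumes "\<exists>t. cs t \<in> target x R Z" "\<forall>t \<le> tb. reach R (cs t) d" "d \<notin> target x R Z"
  shows "tb < (LEAST t. cs t \<in> target x R Z)"
proof (rule ccontr)
  let ?t = "LEAST t. cs t \<in> target x R Z"
  assume "\<not> tb < ?t"
  then have "reach R (cs ?t) d" using assms(2) by (simp add: not_less)
  moreover have "cs ?t \<in> target x R Z" using assms(1) by (rule LeastI_ex)
  ultimately show False using assms(3) target_reach_closed by blast
qed

lemma slow_execution_from_pitfall:
  fixes R :: "('s::finite) reaction set" and \<phi> :: "nat \<Rightarrow> real"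
  assumes prot: "crn_protocol R" and corr: "correct x R \<mu> Cr" and valid: "valid \<mu> Cr c0"
    and bounded: "\<forall>c. reach R c0 c \<longrightarrow> real (norm1 c) \<le> K"
    and pf: "pitfall x R \<mu> Cr (\<phi> (norm1 c0)) s c0 c" and s: "0 < s"
    and a: "a * real (norm1 c0) \<le> \<phi> (norm1 c0)" and big: "real (card R) * s < a * real (norm1 c0)"
  shows "\<exists>cs as \<sigma>. execution R c0 cs as \<and> weakly_fair R cs as \<and> skipping_policy \<sigma> \<and>
     (\<forall>\<rho>. runtime_policy R \<rho> \<longrightarrow>
        ennreal (a / (2 * real (card R) * s) * real (norm1 c0)) \<le> RT x R \<mu> Cr \<phi> \<rho> \<sigma> cs as)"
proof -
  define \<phi>v where "\<phi>v = \<phi> (norm1 c0)"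
  define L where "L = \<phi>v / (2 * real (card R) * s)"
  have fin: "finite R" using prot by (simp add: crn_protocol_def)
  have R: "0 < card R" by (rule card_reactions_pos[OF prot])
  have pf: "pitfall x R \<mu> Cr \<phi>v s c0 c" and big: "real (card R) * s < \<phi>v"
    using pf big a by (simp_all add: \<phi>v_def)
  moreover have "0 < real (card R) * s" using R s by simp
  ultimately have \<phi>v: "0 < \<phi>v" by linarith
  obtain d B where d: "d \<in> B" "reach R c0 d" "1 \<le> norm1 d" and B: "finite B"
    and strong: "\<forall>e\<in>B. \<forall>e'\<in>B. (edge_step (fast R \<phi>v s))\<^sup>*\<^sup>* e e'"
    and closed: "\<forall>e\<in>B. \<forall>\<alpha>. fast R \<phi>v s e \<alpha> \<longrightarrow> result \<alpha> e \<in> B"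
    and fast: "\<forall>e\<in>B. \<exists>\<alpha>. fast R \<phi>v s e \<alpha>"
    and no_target: "\<forall>e\<in>B. e \<notin> target x R (Zset \<mu> Cr c0)"
    by (rule pitfall_fast_trap[OF prot finite_reachable[OF bounded] pf big \<phi>v])
  define Pm where "Pm = Max (ptot R \<phi>v ` B)"
  have Pm: "\<forall>e\<in>B. ptot R \<phi>v e \<le> Pm" using B by (simp add: Pm_def)
  obtain \<alpha> where "fast R \<phi>v s d \<alpha>" using fast d(1) by blast
  then have "0 < Pm" using Pm d(1) ptot_pos_if_fast[OF fin \<phi>v less_imp_le[OF s]] by fastforce
  define M where "M = nat \<lceil>L * Pm\<rceil>"
  have M: "L \<le> real M / Pm"
    using \<open>0 < Pm\<close> real_nat_ceiling_ge[of "L * Pm"] by (simp add: M_def field_simps)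
  obtain cs as ta w where w: "0 < w" and exec: "execution R c0 cs as" "weakly_fair R cs as"
    and to_d: "\<forall>t \<le> ta + M * w. reach R (cs t) d"
    and inB: "\<forall>t. ta \<le> t \<longrightarrow> t < ta + M * w \<longrightarrow> cs t \<in> B"
    and sweep: "\<forall>t. ta \<le> t \<longrightarrow> t + w \<le> ta + M * w \<longrightarrow>
        (\<forall>e\<in>B. \<forall>\<alpha>. fast R \<phi>v s e \<alpha> \<longrightarrow> (\<exists>t'. t \<le> t' \<and> t' < t + w \<and> cs t' = e \<and> as t' = \<alpha>))"
    using sweeping_execution_exists[OF prot _ strong closed B fast d, of M]
    unfolding fast_def by blast
  have cs0: "cs 0 = c0" using exec(1) by (simp add: execution_def)
  have "\<exists>t. cs t \<in> target x R (Zset \<mu> Cr c0)"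
    using corr valid exec unfolding correct_def by blast
  then have tstar: "ta + M * w < (LEAST t. cs t \<in> target x R (Zset \<mu> Cr c0))"
    using to_d no_target d(1) by (intro Least_target_gt) auto
  have "ennreal (a / (2 * real (card R) * s) * real (norm1 c0)) \<le> ennreal L"
    using a R s by (intro ennreal_leI) (simp add: L_def \<phi>v_def divide_right_mono)
  also have "\<dots> \<le> RT x R \<mu> Cr \<phi> \<rho> (\<lambda>t. max t ta) cs as" if "runtime_policy R \<rho>" for \<rho>
    using rounds_cost_ge[OF fin exec(2) that \<phi>v s R B fast closed w inB sweep Pm M[unfolded L_def] tstar]
    by (simp add: RT_def Let_def cs0 \<phi>v_def L_def)
  moreover have "skipping_policy (\<lambda>t. max t ta)" by (simp add: skipping_policy_def)
  ultimately show ?thesis using exec by (meson order_trans)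
qed

theorem lemma4p4:
  fixes x :: mode
    and R :: "('s::finite) reaction set"
    and \<mu> :: "'s \<Rightarrow> 'u"
    and Cr :: "(('u \<Rightarrow> nat) \<times> ('u \<Rightarrow> nat)) set"
    and \<phi> :: "nat \<Rightarrow> real"
    and C0 :: "'s config set"
  assumes protocol: "crn_protocol R"
    and volume: "\<exists>a>0. \<exists>b>0. \<forall>n\<ge>1. a * real n \<le> \<phi> n \<and> \<phi> n \<le> b * real n"
    and density: "\<exists>D>0. \<forall>c0 c. valid \<mu> Cr c0 \<and> reach R c0 c \<longrightarrow> real (norm1 c) \<le> D * real (norm1 c0)"
    and corr: "correct x R \<mu> Cr"
    and C0_inf: "infinite C0"
    and C0_valid: "\<forall>c0\<in>C0. valid \<mu> Cr c0"
    and fault: "speed_fault x R \<mu> Cr \<phi> C0"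
  shows "\<exists>\<kappa>>0. \<forall>n0>0. \<exists>c0\<in>C0. n0 \<le> norm1 c0 \<and>
           (\<exists>cs as. execution R c0 cs as \<and> weakly_fair R cs as \<and>
              (\<exists>\<sigma>. skipping_policy \<sigma> \<and>
                 (\<forall>\<rho>. runtime_policy R \<rho> \<longrightarrow>
                    ennreal (\<kappa> * real (norm1 c0)) \<le> RT x R \<mu> Cr \<phi> \<rho> \<sigma> cs as)))"
proof -
  obtain a where a: "0 < a" "\<forall>n\<ge>1. a * real n \<le> \<phi> n" using volume by blast
  obtain D where D: "\<forall>c0 c. valid \<mu> Cr c0 \<and> reach R c0 c \<longrightarrow> real (norm1 c) \<le> D * real (norm1 c0)"
    using density by blast
  obtain s where s: "0 < s" "\<forall>n0>0. \<exists>c0\<in>C0. n0 \<le> norm1 c0 \<and> (\<exists>c. pitfall x R \<mu> Cr (\<phi> (norm1 c0)) s c0 c)"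
    using fault unfolding speed_fault_def by blast
  define \<kappa> where "\<kappa> = a / (2 * real (card R) * s)"
  show ?thesis
  proof (intro exI[of _ \<kappa>] conjI allI impI)
    show "0 < \<kappa>" using a(1) s(1) card_reactions_pos[OF protocol] by (simp add: \<kappa>_def)
    fix n0 :: nat assume "0 < n0"
    define N where "N = max n0 (nat \<lceil>real (card R) * s / a\<rceil> + 1)"
    have "0 < N" by (simp add: N_def)
    then obtain c0 c where c0: "c0 \<in> C0" "N \<le> norm1 c0" and pf: "pitfall x R \<mu> Cr (\<phi> (norm1 c0)) s c0 c"
      using s(2) by blast
    have valid: "valid \<mu> Cr c0" using C0_valid c0(1) by blast
    then have bounded: "\<forall>c. reach R c0 c \<longrightarrow> real (norm1 c) \<le> D * real (norm1 c0)" using D by blast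
    have "n0 \<le> norm1 c0" using c0(2) by (simp add: N_def)
    have "real (card R) * s / a < real (norm1 c0)" using c0(2) unfolding N_def by linarith
    then have big: "real (card R) * s < a * real (norm1 c0)" using a(1) by (simp add: field_simps)
    have "a * real (norm1 c0) \<le> \<phi> (norm1 c0)" using a(2) valid by (simp add: valid_def)
    from slow_execution_from_pitfall[where \<phi> = \<phi>, OF protocol corr valid bounded pf s(1) this big]
    show "\<exists>c0\<in>C0. n0 \<le> norm1 c0 \<and> (\<exists>cs as. execution R c0 cs as \<and> weakly_fair R cs as \<and>
        (\<exists>\<sigma>. skipping_policy \<sigma> \<and> (\<forall>\<rho>. runtime_policy R \<rho> \<longrightarrow>
           ennreal (\<kappa> * real (norm1 c0)) \<le> RT x R \<mu> Cr \<phi> \<rho> \<sigma> cs as)))"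
      using c0(1) \<open>n0 \<le> norm1 c0\<close> unfolding \<kappa>_def by auto
  qed
qed

end
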